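(* Let $p$ be a prime and let $G$ be a finite $p$-group which is metabelian and $p$-central. Then $\exp(G\wedge G)$ divides $\exp(G)$.
   Context: $G$ is $p$-central if $x^p$ lies in the center $Z(G)$ for every $x\in G$ (equivalently $G^p\subseteq Z(G)$). Metabelian means $[G,G]$ is abelian. Conventions: ${}^g h = ghg^{-1}$, $[g,h]=ghg^{-1}h^{-1}$. The nonabelian tensor square $G\otimes G$ is generated by symbols $g\otimes h$ subject to $gg'\otimes h=({}^g g'\otimes {}^g h)(g\otimes h)$ and $g\otimes hh'=(g\otimes h)({}^h g\otimes {}^h h')$; the exterior square $G\wedge G$ is its quotient by the subgroup generated by all $x\otimes x$. *)

theory Defs
  imports "HOL-Algebra.Algebra"
begin

definition group_center :: "('a, 'b) monoid_scheme \<Rightarrow> 'a set" where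
  "group_center G = {z \<in> carrier G. \<forall>x \<in> carrier G. z \<otimes>\<^bsub>G\<^esub> x = x \<otimes>\<^bsub>G\<^esub> z}"

definition finite_p_group :: "('a, 'b) monoid_scheme \<Rightarrow> nat \<Rightarrow> bool" where
  "finite_p_group G p \<longleftrightarrow> group G \<and> finite (carrier G) \<and> (\<exists>n. order G = p ^ n)"

definition metabelian :: "('a, 'b) monoid_scheme \<Rightarrow> bool" where
  "metabelian G \<longleftrightarrow> (\<forall>a \<in> derived G (carrier G). \<forall>b \<in> derived G (carrier G).
       a \<otimes>\<^bsub>G\<^esub> b = b \<otimes>\<^bsub>G\<^esub> a)"

definition p_central :: "('a, 'b) monoid_scheme \<Rightarrow> nat \<Rightarrow> bool" where
  "p_central G p \<longleftrightarrow> (\<forall>x \<in> carrier G. x [^]\<^bsub>G\<^esub> (p::nat) \<in> group_center G)"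

definition group_exponent :: "('a, 'b) monoid_scheme \<Rightarrow> nat" where
  "group_exponent G =
     (if \<exists>n::nat>0. \<forall>x \<in> carrier G. x [^]\<^bsub>G\<^esub> n = \<one>\<^bsub>G\<^esub>
      then (LEAST n::nat. n > 0 \<and> (\<forall>x \<in> carrier G. x [^]\<^bsub>G\<^esub> n = \<one>\<^bsub>G\<^esub>))
      else 0)"

definition conjg :: "('a, 'b) monoid_scheme \<Rightarrow> 'a \<Rightarrow> 'a \<Rightarrow> 'a" where
  "conjg G g h = g \<otimes>\<^bsub>G\<^esub> h \<otimes>\<^bsub>G\<^esub> inv\<^bsub>G\<^esub> g"

text \<open>Words in the free group on symbols g\<otimes>h (g,h \<in> G): a letter ((g,h),True)
  stands for the generator g\<otimes>h, ((g,h),False) for its inverse; the product is concatenation.\<close>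
type_synonym 'a ext_word = "(('a \<times> 'a) \<times> bool) list"

definition good_word :: "('a, 'b) monoid_scheme \<Rightarrow> 'a ext_word \<Rightarrow> bool" where
  "good_word G w \<longleftrightarrow> (\<forall>l \<in> set w. fst (fst l) \<in> carrier G \<and> snd (fst l) \<in> carrier G)"

definition gen :: "'a \<Rightarrow> 'a \<Rightarrow> 'a ext_word" where
  "gen g h = [((g, h), True)]"

inductive ext_eqv :: "('a, 'b) monoid_scheme \<Rightarrow> 'a ext_word \<Rightarrow> 'a ext_word \<Rightarrow> bool"
  for G where
  refl: "ext_eqv G w w"
| sym: "ext_eqv G u v \<Longrightarrow> ext_eqv G v u"
| trans: "ext_eqv G u v \<Longrightarrow> ext_eqv G v w \<Longrightarrow> ext_eqv G u w"
| cong: "ext_eqv G u v \<Longrightarrow> ext_eqv G (a @ u @ b) (a @ v @ b)"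
| cancel: "g \<in> carrier G \<Longrightarrow> h \<in> carrier G \<Longrightarrow>
     ext_eqv G [((g, h), e), ((g, h), \<not> e)] []"
| rel_left: "g \<in> carrier G \<Longrightarrow> g' \<in> carrier G \<Longrightarrow> h \<in> carrier G \<Longrightarrow>
     ext_eqv G (gen (g \<otimes>\<^bsub>G\<^esub> g') h) (gen (conjg G g g') (conjg G g h) @ gen g h)"
| rel_right: "g \<in> carrier G \<Longrightarrow> h \<in> carrier G \<Longrightarrow> h' \<in> carrier G \<Longrightarrow>
     ext_eqv G (gen g (h \<otimes>\<^bsub>G\<^esub> h')) (gen g h @ gen (conjg G h g) (conjg G h h'))"
| rel_ext: "x \<in> carrier G \<Longrightarrow> ext_eqv G (gen x x) []"

definition ext_class :: "('a, 'b) monoid_scheme \<Rightarrow> 'a ext_word \<Rightarrow> 'a ext_word set" where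
  "ext_class G w = {v. ext_eqv G v w}"

definition ext_mult :: "('a, 'b) monoid_scheme \<Rightarrow> 'a ext_word set \<Rightarrow> 'a ext_word set \<Rightarrow> 'a ext_word set" where
  "ext_mult G A B = {v. \<exists>x \<in> A. \<exists>y \<in> B. ext_eqv G v (x @ y)}"

definition exterior_square :: "('a, 'b) monoid_scheme \<Rightarrow> 'a ext_word set monoid" where
  "exterior_square G =
     \<lparr> carrier = ext_class G ` {w. good_word G w},
       monoid.mult = ext_mult G,
       one = ext_class G [] \<rparr>"

end

theory Submission
  imports Defs
begin

(*
  The commutator map \<kappa> : G \<wedge> G \<rightarrow> G, g \<wedge> h \<mapsto> [g, h], together with the conjugation
  action a \<cdot> w of G on G \<wedge> G, is a crossed module: w V w\<inverse> = \<kappa> w \<cdot> V; moreover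
  a \<cdot> w = (a \<wedge> \<kappa> w) w. Hence the kernel of \<kappa> is central and [w, V] = \<kappa> w \<wedge> \<kappa> V. If G is
  metabelian and p-central, then u \<wedge> v is central and bilinear for u, v in [G, G], and
  (u \<wedge> v)^p = u^p \<wedge> v = 1 since u^p is central. So G \<wedge> G has class at most two with
  commutators of order p, and by (A B)^e = A^e B^e [B, A]^(e(e-1)/2) the elements w with w^e = 1,
  where e = exp G = p^n, form a subgroup (if e = 2, then G and hence G \<wedge> G is abelian).

  It remains to treat a generator x \<wedge> y. Expanding the product of the x \<wedge> y^i, i < p, in two
  ways gives (x \<wedge> y)^p = (x \<wedge> y^p) (y \<wedge> s)\<inverse> with s = [x, y^0] [x, y^1] ... [x, y^(p-1)].
  Both factors are central of order dividing e/p: x \<wedge> y^p because y^p is central and y^e = 1,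
  and y \<wedge> s because a double counting argument with the power maps g \<mapsto> g^p shows that s is
  central with s^(e/p) = 1.
*)

definition commutator :: "('a, 'b) monoid_scheme \<Rightarrow> 'a \<Rightarrow> 'a \<Rightarrow> 'a" where
  "commutator G a b = a \<otimes>\<^bsub>G\<^esub> b \<otimes>\<^bsub>G\<^esub> inv\<^bsub>G\<^esub> a \<otimes>\<^bsub>G\<^esub> inv\<^bsub>G\<^esub> b"

definition center_torsion :: "('a, 'b) monoid_scheme \<Rightarrow> nat \<Rightarrow> 'a set" where
  "center_torsion G q = {z \<in> group_center G. z [^]\<^bsub>G\<^esub> q = \<one>\<^bsub>G\<^esub>}"

primrec prod_up :: "('a, 'b) monoid_scheme \<Rightarrow> (nat \<Rightarrow> 'a) \<Rightarrow> nat \<Rightarrow> 'a" where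
  "prod_up M f 0 = \<one>\<^bsub>M\<^esub>"
| "prod_up M f (Suc n) = prod_up M f n \<otimes>\<^bsub>M\<^esub> f n"

primrec prod_down :: "('a, 'b) monoid_scheme \<Rightarrow> (nat \<Rightarrow> 'a) \<Rightarrow> nat \<Rightarrow> 'a" where
  "prod_down M f 0 = \<one>\<^bsub>M\<^esub>"
| "prod_down M f (Suc n) = f n \<otimes>\<^bsub>M\<^esub> prod_down M f n"

lemma (in comm_monoid) finprod_swap:
  assumes "finite A" and "\<And>a k. a \<in> A \<Longrightarrow> k \<in> B \<Longrightarrow> g a k \<in> carrier G"
  shows "(\<Otimes>a\<in>A. \<Otimes>k\<in>B. g a k) = (\<Otimes>k\<in>B. \<Otimes>a\<in>A. g a k)"
  using assms
proof (induction A rule: finite_induct)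
  case (insert a0 A)
  have "(\<Otimes>a\<in>insert a0 A. \<Otimes>k\<in>B. g a k) = (\<Otimes>k\<in>B. g a0 k) \<otimes> (\<Otimes>k\<in>B. \<Otimes>a\<in>A. g a k)"
    using insert by (simp add: Pi_def)
  also have "\<dots> = (\<Otimes>k\<in>B. g a0 k \<otimes> (\<Otimes>a\<in>A. g a k))"
    using insert.prems by (intro finprod_multf[symmetric]) (auto simp add: Pi_def)
  also have "\<dots> = (\<Otimes>k\<in>B. \<Otimes>a\<in>insert a0 A. g a k)"
    using insert by (intro finprod_cong') (auto simp add: Pi_def)
  finally show ?case .
qed simp

lemma mult_mod_prime_image:
  fixes p k :: nat
  assumes p: "Factorial_Ring.prime p" and k: "0 < k" "k < p"
  shows "inj_on (\<lambda>a. a * k mod p) {..<p}" and "(\<lambda>a. a * k mod p) ` {..<p} = {..<p}"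
proof -
  show inj: "inj_on (\<lambda>a. a * k mod p) {..<p}"
  proof (rule inj_onI)
    fix a b assume ab: "a \<in> {..<p}" "b \<in> {..<p}" and eq: "a * k mod p = b * k mod p"
    have "\<not> p dvd k" using k by (simp add: nat_dvd_not_less)
    have le: "a = b" if "b \<le> a" "a < p" "a * k mod p = b * k mod p" for a b :: nat
    proof -
      have "p dvd (a - b) * k" using that by (simp add: mod_eq_dvd_iff_nat diff_mult_distrib)
      then have "p dvd a - b" using p \<open>\<not> p dvd k\<close> by (simp add: prime_dvd_mult_iff)
      then show ?thesis using that nat_dvd_not_less[of "a - b" p] by (cases "b < a") auto
    qed
    show "a = b"
    proof (cases "b \<le> a")
      case True
      then show ?thesis using le[of b a] ab eq by simp
    next
      case False
      then show ?thesis using le[of a b] ab eq by simp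
    qed
  qed
  show "(\<lambda>a. a * k mod p) ` {..<p} = {..<p}"
    using k by (intro endo_inj_surj inj) auto
qed

lemma prime_dvd_sum_lessThan:
  fixes p e :: nat
  assumes p: "Factorial_Ring.prime p" and e: "e = p ^ n" and "e \<noteq> 2"
  shows "p dvd (\<Sum>i<e. i)"
proof -
  have double: "2 * (\<Sum>i<e. i) = e * (e - 1)" by (induction e) (auto simp add: algebra_simps)
  show ?thesis
  proof (cases "p = 2")
    case True
    have "n \<noteq> 1" using e \<open>e \<noteq> 2\<close> True by auto
    then consider "n = 0" | m where "n = Suc (Suc m)"
      by (metis One_nat_def not0_implies_Suc)
    then show ?thesis
    proof cases
      case (2 m)
      then have "2 * (\<Sum>i<e. i) = 2 * (2 * (2 ^ m * (e - 1)))"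
        unfolding double using e True by simp
      then show ?thesis using True by simp
    qed (use e in simp)
  next
    case False
    have "p dvd 2 * (\<Sum>i<e. i)"
      unfolding double using e prime_gt_1_nat[OF p] by (cases n) simp_all
    moreover have "\<not> p dvd 2"
      using False prime_ge_2_nat[OF p] by (metis dvd_imp_le le_antisym zero_less_numeral)
    ultimately show ?thesis using p by (simp add: prime_dvd_mult_iff)
  qed
qed

lemma group_exponent_minimal:
  fixes e :: nat
  assumes "0 < e" and pow: "\<And>x. x \<in> carrier M \<Longrightarrow> x [^]\<^bsub>M\<^esub> e = \<one>\<^bsub>M\<^esub>"
  shows "0 < group_exponent M" and "\<And>x. x \<in> carrier M \<Longrightarrow> x [^]\<^bsub>M\<^esub> group_exponent M = \<one>\<^bsub>M\<^esub>"
    and "\<And>d. 0 < d \<Longrightarrow> (\<And>x. x \<in> carrier M \<Longrightarrow> x [^]\<^bsub>M\<^esub> d = \<one>\<^bsub>M\<^esub>) \<Longrightarrow> group_exponent M \<le> d"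
proof -
  define P where "P = (\<lambda>n::nat. 0 < n \<and> (\<forall>x \<in> carrier M. x [^]\<^bsub>M\<^esub> n = \<one>\<^bsub>M\<^esub>))"
  have "P e" using assms by (simp add: P_def)
  then have d: "group_exponent M = (LEAST n. P n)"
    unfolding group_exponent_def P_def by (metis (mono_tags, lifting))
  show "0 < group_exponent M" "\<And>x. x \<in> carrier M \<Longrightarrow> x [^]\<^bsub>M\<^esub> group_exponent M = \<one>\<^bsub>M\<^esub>"
    using LeastI[of P, OF \<open>P e\<close>] by (simp_all add: d P_def)
  show "group_exponent M \<le> d" if "0 < d" "\<And>x. x \<in> carrier M \<Longrightarrow> x [^]\<^bsub>M\<^esub> d = \<one>\<^bsub>M\<^esub>" for d
    using Least_le[of P d] that by (simp add: d P_def)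
qed

lemma group_exponent_dvdI:
  assumes M: "group M" and e: "0 < e" and pow: "\<And>x. x \<in> carrier M \<Longrightarrow> x [^]\<^bsub>M\<^esub> e = \<one>\<^bsub>M\<^esub>"
  shows "group_exponent M dvd e"
proof -
  interpret M: group M by (rule M)
  define d where "d = group_exponent M"
  have d: "0 < d" and d_pow: "\<And>x. x \<in> carrier M \<Longrightarrow> x [^]\<^bsub>M\<^esub> d = \<one>\<^bsub>M\<^esub>"
    using group_exponent_minimal(1,2)[of e M] e pow by (auto simp add: d_def)
  have "x [^]\<^bsub>M\<^esub> (e mod d) = \<one>\<^bsub>M\<^esub>" if x: "x \<in> carrier M" for x
  proof -
    have "\<one>\<^bsub>M\<^esub> = (x [^]\<^bsub>M\<^esub> d) [^]\<^bsub>M\<^esub> (e div d) \<otimes>\<^bsub>M\<^esub> x [^]\<^bsub>M\<^esub> (e mod d)"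
      using pow[OF x] x by (simp add: M.nat_pow_mult M.nat_pow_pow)
    then show ?thesis using d_pow[OF x] x by simp
  qed
  then have "e mod d = 0"
    using group_exponent_minimal(3)[of e M "e mod d"] e pow mod_less_divisor[OF d, of e]
    by (auto simp add: d_def)
  then show ?thesis by (simp add: d_def mod_eq_0_iff_dvd)
qed

lemma pow_group_exponent:
  assumes M: "group M" and "finite (carrier M)"
  shows "\<And>x. x \<in> carrier M \<Longrightarrow> x [^]\<^bsub>M\<^esub> group_exponent M = \<one>\<^bsub>M\<^esub>" and "0 < group_exponent M"
  using group_exponent_minimal[of "order M" M] group.pow_order_eq_1[OF M] assms
  by (auto simp add: monoid.order_gt_0_iff_finite[OF group.is_monoid[OF M]])

context group
begin

lemma mult_inv_cancel [simp]: "x \<in> carrier G \<Longrightarrow> y \<in> carrier G \<Longrightarrow> x \<otimes> (inv x \<otimes> y) = y"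
  by (simp add: m_assoc[symmetric])

lemma inv_mult_cancel [simp]: "x \<in> carrier G \<Longrightarrow> y \<in> carrier G \<Longrightarrow> inv x \<otimes> (x \<otimes> y) = y"
  by (simp add: m_assoc[symmetric])

lemma conjg_closed [simp]: "x \<in> carrier G \<Longrightarrow> a \<in> carrier G \<Longrightarrow> conjg G x a \<in> carrier G"
  by (simp add: conjg_def)

lemma conjg_mult: "x \<in> carrier G \<Longrightarrow> a \<in> carrier G \<Longrightarrow> b \<in> carrier G \<Longrightarrow>
    conjg G x (a \<otimes> b) = conjg G x a \<otimes> conjg G x b"
  by (simp add: conjg_def m_assoc)

lemma conjg_conjg: "x \<in> carrier G \<Longrightarrow> y \<in> carrier G \<Longrightarrow> a \<in> carrier G \<Longrightarrow>
    conjg G x (conjg G y a) = conjg G (x \<otimes> y) a"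
  by (simp add: conjg_def m_assoc inv_mult_group)

lemma conjg_one_left [simp]: "a \<in> carrier G \<Longrightarrow> conjg G \<one> a = a"
  by (simp add: conjg_def)

lemma conjg_inv: "x \<in> carrier G \<Longrightarrow> a \<in> carrier G \<Longrightarrow> conjg G x (inv a) = inv (conjg G x a)"
  by (simp add: conjg_def m_assoc inv_mult_group)

lemma conjg_hom: "g \<in> carrier G \<Longrightarrow> conjg G g \<in> hom G G"
  by (rule homI) (simp_all add: conjg_mult)

lemma commutator_closed [simp]: "a \<in> carrier G \<Longrightarrow> b \<in> carrier G \<Longrightarrow> commutator G a b \<in> carrier G"
  by (simp add: commutator_def)

lemma commutator_self [simp]: "g \<in> carrier G \<Longrightarrow> commutator G g g = \<one>"
  by (simp add: commutator_def m_assoc)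

lemma commutator_swap: "a \<in> carrier G \<Longrightarrow> b \<in> carrier G \<Longrightarrow> commutator G b a = inv (commutator G a b)"
  by (simp add: commutator_def inv_mult_group m_assoc)

lemma commutator_eq: "g \<in> carrier G \<Longrightarrow> h \<in> carrier G \<Longrightarrow> commutator G g h = g \<otimes> h \<otimes> inv (h \<otimes> g)"
  by (simp add: commutator_def m_assoc inv_mult_group)

lemma commutator_mult_left: "g \<in> carrier G \<Longrightarrow> g' \<in> carrier G \<Longrightarrow> h \<in> carrier G \<Longrightarrow>
   commutator G (g \<otimes> g') h = commutator G (conjg G g g') (conjg G g h) \<otimes> commutator G g h"
  by (simp add: commutator_def conjg_def m_assoc inv_mult_group)

lemma commutator_mult_right: "g \<in> carrier G \<Longrightarrow> h \<in> carrier G \<Longrightarrow> h' \<in> carrier G \<Longrightarrow>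
   commutator G g (h \<otimes> h') = commutator G g h \<otimes> commutator G (conjg G h g) (conjg G h h')"
  by (simp add: commutator_def conjg_def m_assoc inv_mult_group)

lemma commutator_eq_one_iff:
  "a \<in> carrier G \<Longrightarrow> b \<in> carrier G \<Longrightarrow> commutator G a b = \<one> \<longleftrightarrow> a \<otimes> b = b \<otimes> a"
  by (simp add: commutator_eq inv_solve_right')

lemma center_closed: "z \<in> group_center G \<Longrightarrow> z \<in> carrier G"
  by (simp add: group_center_def)

lemma center_commute: "z \<in> group_center G \<Longrightarrow> x \<in> carrier G \<Longrightarrow> z \<otimes> x = x \<otimes> z"
  by (simp add: group_center_def)

lemma subgroup_center: "subgroup (group_center G) G"
proof (rule subgroupI)
  show "group_center G \<noteq> {}"
    using one_closed by (auto simp add: group_center_def)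
next
  fix z assume z: "z \<in> group_center G"
  have "inv z \<otimes> x = x \<otimes> inv z" if x: "x \<in> carrier G" for x
  proof -
    have "inv z \<otimes> (z \<otimes> x) \<otimes> inv z = inv z \<otimes> (x \<otimes> z) \<otimes> inv z"
      by (simp only: center_commute[OF z x])
    then show ?thesis using center_closed[OF z] x by (simp add: m_assoc)
  qed
  then show "inv z \<in> group_center G"
    using center_closed[OF z] unfolding group_center_def by blast
next
  fix z z' assume z: "z \<in> group_center G" and z': "z' \<in> group_center G"
  have "z \<otimes> z' \<otimes> x = x \<otimes> (z \<otimes> z')" if x: "x \<in> carrier G" for x
  proof -
    have "z \<otimes> z' \<otimes> x = z \<otimes> x \<otimes> z'"
      using center_closed[OF z] center_closed[OF z'] x by (simp add: m_assoc center_commute[OF z' x])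
    also have "\<dots> = x \<otimes> (z \<otimes> z')"
      using center_closed[OF z] center_closed[OF z'] x by (simp add: m_assoc center_commute[OF z x])
    finally show ?thesis .
  qed
  then show "z \<otimes> z' \<in> group_center G"
    using center_closed[OF z] center_closed[OF z'] unfolding group_center_def by blast
qed (auto simp add: group_center_def)

lemma center_one [simp]: "\<one> \<in> group_center G"
  using subgroup.one_closed[OF subgroup_center] .

lemma center_mult: "z \<in> group_center G \<Longrightarrow> z' \<in> group_center G \<Longrightarrow> z \<otimes> z' \<in> group_center G"
  using subgroup.m_closed[OF subgroup_center] .

lemma center_inv: "z \<in> group_center G \<Longrightarrow> inv z \<in> group_center G"
  using subgroup.m_inv_closed[OF subgroup_center] .

lemma center_pow: "z \<in> group_center G \<Longrightarrow> z [^] (n::nat) \<in> group_center G"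
  by (induction n) (simp_all add: center_mult)

lemma conjg_by_center: "z \<in> group_center G \<Longrightarrow> x \<in> carrier G \<Longrightarrow> conjg G z x = x"
  by (simp add: conjg_def center_commute center_closed m_assoc)

lemma commutator_center_left: "z \<in> group_center G \<Longrightarrow> x \<in> carrier G \<Longrightarrow> commutator G z x = \<one>"
  by (simp add: commutator_eq_one_iff center_closed center_commute)

lemma commutator_center_right: "z \<in> group_center G \<Longrightarrow> x \<in> carrier G \<Longrightarrow> commutator G x z = \<one>"
  by (simp add: commutator_eq_one_iff center_closed center_commute)

lemma commutator_mult_center_right: "x \<in> carrier G \<Longrightarrow> z \<in> group_center G \<Longrightarrow> w \<in> carrier G \<Longrightarrow>
    commutator G x (z \<otimes> w) = commutator G x w"
  using commutator_mult_right[of x z w]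
  by (simp add: commutator_center_right conjg_by_center center_closed)

lemma center_pow_mult_distrib:
  "z \<in> group_center G \<Longrightarrow> b \<in> carrier G \<Longrightarrow> (z \<otimes> b) [^] (n::nat) = z [^] n \<otimes> b [^] n"
  by (intro pow_mult_distrib center_commute) (simp_all add: center_closed)

lemma subgroup_center_torsion: "subgroup (center_torsion G q) G"
proof (rule subgroupI)
  show "center_torsion G q \<subseteq> carrier G" by (auto simp add: center_torsion_def center_closed)
  have "\<one> \<in> center_torsion G q" by (simp add: center_torsion_def)
  then show "center_torsion G q \<noteq> {}" by blast
  show "inv z \<in> center_torsion G q" if "z \<in> center_torsion G q" for z
    using that by (simp add: center_torsion_def center_inv nat_pow_inv center_closed)
  show "z \<otimes> z' \<in> center_torsion G q" if "z \<in> center_torsion G q" "z' \<in> center_torsion G q" for z z'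
    using that by (simp add: center_torsion_def center_mult center_pow_mult_distrib center_closed)
qed

lemma eq_one_if_pow_two_and_odd:
  assumes x: "x \<in> carrier G" and "x [^] (2::nat) = \<one>" and "x [^] (n::nat) = \<one>" and "odd n"
  shows "x = \<one>"
proof -
  obtain k where "n = Suc (2 * k)" using \<open>odd n\<close> by (metis oddE Suc_eq_plus1)
  then have "x [^] n = (x [^] (2::nat)) [^] k \<otimes> x" using x by (simp add: nat_pow_pow)
  then show ?thesis using assms by simp
qed

abbreviation DG where "DG \<equiv> derived G (carrier G)"

lemma subgroup_DG: "subgroup DG G"
  by (rule derived_is_subgroup) simp

lemma DG_closed: "u \<in> DG \<Longrightarrow> u \<in> carrier G"
  using subgroup.mem_carrier[OF subgroup_DG] .

lemma DG_one: "\<one> \<in> DG"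
  using subgroup.one_closed[OF subgroup_DG] .

lemma DG_mult: "u \<in> DG \<Longrightarrow> v \<in> DG \<Longrightarrow> u \<otimes> v \<in> DG"
  using subgroup.m_closed[OF subgroup_DG] .

lemma DG_inv: "u \<in> DG \<Longrightarrow> inv u \<in> DG"
  using subgroup.m_inv_closed[OF subgroup_DG] .

lemma DG_pow: "u \<in> DG \<Longrightarrow> u [^] (n::nat) \<in> DG"
  by (induction n) (simp_all add: DG_one DG_mult)

lemma DG_conjg: "g \<in> carrier G \<Longrightarrow> u \<in> DG \<Longrightarrow> conjg G g u \<in> DG"
  using derived_is_normal[OF normal_self] unfolding conjg_def by (metis normal_inv_iff)

lemma commutator_in_DG: "a \<in> carrier G \<Longrightarrow> b \<in> carrier G \<Longrightarrow> commutator G a b \<in> DG"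
  unfolding derived_def commutator_def by (rule generate.incl) blast

lemma prod_up_closed [simp]: "(\<And>i. i < n \<Longrightarrow> f i \<in> carrier G) \<Longrightarrow> prod_up G f n \<in> carrier G"
  by (induction n) auto

lemma prod_down_closed [simp]: "(\<And>i. i < n \<Longrightarrow> f i \<in> carrier G) \<Longrightarrow> prod_down G f n \<in> carrier G"
  by (induction n) auto

lemma prod_up_cong: "(\<And>i. i < n \<Longrightarrow> f i = g i) \<Longrightarrow> prod_up G f n = prod_up G g n"
  by (induction n) auto

lemma prod_up_Suc_shift: "(\<And>i. i \<le> n \<Longrightarrow> f i \<in> carrier G) \<Longrightarrow>
    prod_up G f (Suc n) = f 0 \<otimes> prod_up G (\<lambda>i. f (Suc i)) n"
  by (induction n) (auto simp add: m_assoc)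

lemma prod_down_Suc_shift: "(\<And>i. i \<le> n \<Longrightarrow> f i \<in> carrier G) \<Longrightarrow>
    prod_down G f (Suc n) = prod_down G (\<lambda>i. f (Suc i)) n \<otimes> f 0"
  by (induction n) (auto simp add: m_assoc)

lemma prod_up_one: "prod_up G (\<lambda>i. \<one>) n = \<one>"
  by (induction n) simp_all

lemma prod_up_in_subgroup:
  "subgroup H G \<Longrightarrow> (\<And>i. i < n \<Longrightarrow> f i \<in> H) \<Longrightarrow> prod_up G f n \<in> H"
  by (induction n) (simp_all add: subgroup.one_closed subgroup.m_closed)

lemma prod_up_hom:
  assumes h: "h \<in> hom G H" and H: "group H" and f: "\<And>i. i < n \<Longrightarrow> f i \<in> carrier G"
  shows "h (prod_up G f n) = prod_up H (\<lambda>i. h (f i)) n"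
proof -
  interpret group_hom G H h by (intro group_hom.intro group_hom_axioms.intro is_group H h)
  show ?thesis using f by (induction n) simp_all
qed

lemma prod_down_hom:
  assumes h: "h \<in> hom G H" and H: "group H" and f: "\<And>i. i < n \<Longrightarrow> f i \<in> carrier G"
  shows "h (prod_down G f n) = prod_down H (\<lambda>i. h (f i)) n"
proof -
  interpret group_hom G H h by (intro group_hom.intro group_hom_axioms.intro is_group H h)
  show ?thesis using f by (induction n) simp_all
qed

lemma prod_up_commute:
  assumes "\<And>i. i < n \<Longrightarrow> f i \<in> carrier G" and x: "x \<in> carrier G"
    and "\<And>i. i < n \<Longrightarrow> f i \<otimes> x = x \<otimes> f i"
  shows "prod_up G f n \<otimes> x = x \<otimes> prod_up G f n"
  using assms(1,3)
proof (induction n)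
  case (Suc n)
  then have "prod_up G f n \<otimes> (f n \<otimes> x) = x \<otimes> prod_up G f n \<otimes> f n"
    using x by (simp add: m_assoc[symmetric])
  then show ?case using Suc.prems x by (simp add: m_assoc)
qed (use x in simp)

lemma prod_down_eq_prod_up:
  assumes "\<And>i. i < n \<Longrightarrow> f i \<in> carrier G"
    and "\<And>i j. i < n \<Longrightarrow> j < n \<Longrightarrow> f i \<otimes> f j = f j \<otimes> f i"
  shows "prod_down G f n = prod_up G f n"
  using assms by (induction n) (simp_all add: prod_up_commute)

lemma prod_up_pow_center:
  assumes "\<And>i. i < n \<Longrightarrow> f i \<in> group_center G"
  shows "(prod_up G f n) [^] (k::nat) = prod_up G (\<lambda>i. f i [^] k) n"
  using assms
proof (induction n)
  case (Suc n)
  have "f n \<in> group_center G" "prod_up G f n \<in> carrier G"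
    using Suc.prems by (simp_all add: center_closed)
  then have "(prod_up G f n \<otimes> f n) [^] k = f n [^] k \<otimes> prod_up G f n [^] k"
    by (simp add: center_commute[of "f n", symmetric] center_pow_mult_distrib)
  also have "\<dots> = prod_up G f n [^] k \<otimes> f n [^] k"
    using \<open>f n \<in> group_center G\<close> \<open>prod_up G f n \<in> carrier G\<close>
      center_commute[OF center_pow, of "f n" "prod_up G f n [^] k" k] by simp
  finally show ?case using Suc by simp
qed simp

lemma prod_up_telescope:
  assumes "\<And>i. i \<le> n \<Longrightarrow> f i \<in> group_center G"
  shows "prod_up G (\<lambda>i. inv (f (Suc i))) n \<otimes> prod_up G f n = inv (f n) \<otimes> f 0"
  using assms
proof (induction n)
  case (Suc n)
  define R where "R = prod_up G (\<lambda>i. inv (f (Suc i))) n"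
  define S where "S = prod_up G f n"
  have Z: "f n \<in> group_center G" "inv (f (Suc n)) \<in> group_center G"
    using Suc.prems by (simp_all add: center_inv)
  have C: "R \<in> carrier G" "S \<in> carrier G" "f 0 \<in> carrier G" "f n \<in> carrier G" "f (Suc n) \<in> carrier G"
    using Suc.prems by (simp_all add: R_def S_def center_closed)
  have "R \<otimes> inv (f (Suc n)) \<otimes> (S \<otimes> f n) = (R \<otimes> S) \<otimes> (inv (f (Suc n)) \<otimes> f n)"
    using C center_commute[OF Z(2) C(2)] by (simp add: m_assoc[symmetric]) (simp add: m_assoc)
  also have "\<dots> = f n \<otimes> (inv (f n) \<otimes> f 0 \<otimes> inv (f (Suc n)))"
    using Suc C center_commute[OF Z(1), of "inv (f n) \<otimes> f 0 \<otimes> inv (f (Suc n))"]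
    by (simp add: R_def S_def m_assoc)
  also have "\<dots> = inv (f (Suc n)) \<otimes> f 0"
    using C center_commute[OF Z(2) C(3)] by (simp add: m_assoc)
  finally show ?case by (simp add: R_def S_def)
qed (simp add: center_closed)

lemma pow_mult_eq_prod_up_commutator: "g \<in> carrier G \<Longrightarrow> h \<in> carrier G \<Longrightarrow>
  (g \<otimes> h) [^] (n::nat) = prod_up G (\<lambda>k. conjg G (g [^] k) (commutator G (h [^] k) g)) n \<otimes> g [^] n \<otimes> h [^] n"
proof (induction n)
  case (Suc n)
  define R where "R = prod_up G (\<lambda>k. conjg G (g [^] k) (commutator G (h [^] k) g)) n"
  have "R \<in> carrier G" using Suc.prems by (simp add: R_def)
  then have "R \<otimes> g [^] n \<otimes> h [^] n \<otimes> (g \<otimes> h)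
      = R \<otimes> conjg G (g [^] n) (commutator G (h [^] n) g) \<otimes> g [^] Suc n \<otimes> h [^] Suc n"
    using Suc.prems by (simp add: conjg_def commutator_def m_assoc)
  then show ?case using Suc by (simp add: R_def)
qed simp

lemma pow_mult_eq_prod_up_conjg: "u \<in> carrier G \<Longrightarrow> x \<in> carrier G \<Longrightarrow>
  (u \<otimes> x) [^] (n::nat) = prod_up G (\<lambda>k. conjg G (x [^] k) u) n \<otimes> x [^] n"
proof (induction n)
  case (Suc n)
  define R where "R = prod_up G (\<lambda>k. conjg G (x [^] k) u) n"
  have "R \<in> carrier G" using Suc.prems by (simp add: R_def)
  then have "R \<otimes> x [^] n \<otimes> (u \<otimes> x) = R \<otimes> conjg G (x [^] n) u \<otimes> x [^] Suc n"
    using Suc.prems by (simp add: conjg_def m_assoc)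
  then show ?case using Suc by (simp add: R_def)
qed simp

lemma pow_mult_central_commutator:
  assumes a: "a \<in> carrier G" and b: "b \<in> carrier G"
    and "commutator G b a \<in> group_center G"
  shows "(a \<otimes> b) [^] (n::nat) = a [^] n \<otimes> b [^] n \<otimes> commutator G b a [^] (\<Sum>i<n. i)"
proof -
  define z where "z = commutator G b a"
  have zc: "z \<in> carrier G" and zZ: "\<And>k::nat. z [^] k \<in> group_center G"
    using assms by (simp_all add: z_def center_pow)
  have ba: "b \<otimes> a = z \<otimes> a \<otimes> b" using a b by (simp add: z_def commutator_def m_assoc)
  have bna: "b [^] k \<otimes> a = z [^] k \<otimes> a \<otimes> b [^] k" for k :: nat
  proof (induction k)
    case (Suc k)
    have "b [^] Suc k \<otimes> a = b [^] k \<otimes> (z \<otimes> a) \<otimes> b" using a b zc by (simp add: m_assoc ba)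
    also have "\<dots> = z \<otimes> (b [^] k \<otimes> a) \<otimes> b"
      using center_commute[OF zZ[of 1], of "b [^] k"] a b zc by (simp add: m_assoc[symmetric])
    also have "\<dots> = (z \<otimes> z [^] k) \<otimes> a \<otimes> (b [^] k \<otimes> b)"
      using Suc a b zc by (simp add: m_assoc)
    also have "z \<otimes> z [^] k = z [^] Suc k"
      by (simp only: nat_pow_Suc2[OF zc])
    finally show ?case by simp
  qed (use a in simp)
  show ?thesis unfolding z_def[symmetric]
  proof (induction n)
    case (Suc n)
    have "(a \<otimes> b) [^] Suc n = a [^] n \<otimes> b [^] n \<otimes> z [^] (\<Sum>i<n. i) \<otimes> (a \<otimes> b)"
      using Suc by simp
    also have "\<dots> = a [^] n \<otimes> (b [^] n \<otimes> a) \<otimes> b \<otimes> z [^] (\<Sum>i<n. i)"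
      using center_commute[OF zZ, of "a \<otimes> b" "\<Sum>i<n. i"] a b zc by (simp add: m_assoc)
    also have "\<dots> = a [^] n \<otimes> (z [^] n \<otimes> (a \<otimes> b [^] n \<otimes> b)) \<otimes> z [^] (\<Sum>i<n. i)"
      using a b zc by (simp add: bna m_assoc)
    also have "\<dots> = a [^] n \<otimes> (a \<otimes> b [^] n \<otimes> b) \<otimes> (z [^] n \<otimes> z [^] (\<Sum>i<n. i))"
      using center_commute[OF zZ, of "a \<otimes> b [^] n \<otimes> b" n] a b zc by (simp add: m_assoc)
    also have "\<dots> = a [^] Suc n \<otimes> b [^] Suc n \<otimes> z [^] (\<Sum>i<Suc n. i)"
      using a b zc by (simp add: nat_pow_mult add.commute m_assoc)
    finally show ?case .
  qed simp
qed

lemma prod_up_inv_mult_eq: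
  assumes m: "m \<in> carrier G" and q: "\<And>i. q i \<in> carrier G" and z: "\<And>i. z i \<in> group_center G"
    and conj: "\<And>i. m \<otimes> prod_up G q i \<otimes> inv m = z i \<otimes> prod_up G q i"
  shows "prod_up G (\<lambda>i. inv m \<otimes> q i) j = inv m [^] j \<otimes> prod_up G q j \<otimes> prod_up G z j"
proof (induction j)
  case (Suc j)
  define A where "A = inv m [^] j"
  define Z where "Z = prod_up G z j"
  have C: "A \<in> carrier G" "Z \<in> group_center G" "prod_up G q j \<in> carrier G" "z j \<in> carrier G"
    using m q z by (simp_all add: A_def Z_def prod_up_in_subgroup[OF subgroup_center] center_closed)
  have "prod_up G (\<lambda>i. inv m \<otimes> q i) (Suc j) = A \<otimes> prod_up G q j \<otimes> (inv m \<otimes> q j) \<otimes> Z"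
    using Suc C m q center_commute[OF C(2), of "inv m \<otimes> q j"]
    by (simp add: A_def Z_def m_assoc center_closed)
  also have "\<dots> = A \<otimes> inv m \<otimes> (m \<otimes> prod_up G q j \<otimes> inv m) \<otimes> q j \<otimes> Z"
    using C m q by (simp add: m_assoc center_closed)
  also have "\<dots> = A \<otimes> inv m \<otimes> prod_up G q (Suc j) \<otimes> (Z \<otimes> z j)"
    using C m q center_commute[OF z[of j], of "prod_up G q j \<otimes> q j \<otimes> Z"]
    by (simp add: conj m_assoc center_closed)
  finally show ?case
    using C m by (simp add: A_def Z_def nat_pow_Suc2[symmetric] nat_pow_mult[symmetric] m_assoc
        del: nat_pow_Suc)
qed simp

lemma prod_down_inv_mult_eq:
  assumes m: "m \<in> carrier G" and q: "\<And>i. q i \<in> carrier G" and z: "\<And>i. z i \<in> group_center G"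
    and conj: "\<And>i. inv m \<otimes> prod_down G q (Suc i) \<otimes> m = z i \<otimes> prod_down G q (Suc i)"
  shows "prod_down G (\<lambda>i. inv m \<otimes> q i) j = prod_down G q j \<otimes> inv m [^] j \<otimes> prod_up G z j"
proof (induction j)
  case (Suc j)
  define A where "A = inv m [^] j"
  define Z where "Z = prod_up G z j"
  define L where "L = prod_down G q (Suc j)"
  have C: "A \<in> carrier G" "Z \<in> group_center G" "L \<in> carrier G" "z j \<in> carrier G"
    using m q z by (simp_all add: A_def Z_def L_def prod_up_in_subgroup[OF subgroup_center] center_closed)
  have "prod_down G (\<lambda>i. inv m \<otimes> q i) (Suc j) = (inv m \<otimes> L \<otimes> m) \<otimes> (inv m \<otimes> A) \<otimes> Z"
    using Suc C m q by (simp add: A_def Z_def L_def m_assoc center_closed)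
  also have "\<dots> = z j \<otimes> L \<otimes> (inv m \<otimes> A) \<otimes> Z"
    unfolding L_def by (simp only: conj)
  also have "\<dots> = z j \<otimes> (L \<otimes> (inv m \<otimes> A) \<otimes> Z)"
    using C m by (simp add: m_assoc center_closed)
  also have "\<dots> = L \<otimes> (inv m \<otimes> A) \<otimes> (Z \<otimes> z j)"
    using C m center_commute[OF z[of j], of "L \<otimes> (inv m \<otimes> A) \<otimes> Z"]
    by (simp add: m_assoc center_closed)
  finally show ?case
    using C m by (simp add: A_def Z_def L_def nat_pow_Suc2[symmetric] m_assoc del: nat_pow_Suc)
qed simp

end

section \<open>The exterior square as a group\<close>

lemma ext_eqv_append_left: "ext_eqv G u v \<Longrightarrow> ext_eqv G (a @ u) (a @ v)"
  using ext_eqv.cong[of G u v a "[]"] by simp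

lemma ext_eqv_append_right: "ext_eqv G u v \<Longrightarrow> ext_eqv G (u @ b) (v @ b)"
  using ext_eqv.cong[of G u v "[]" b] by simp

lemma ext_eqv_append: "ext_eqv G u v \<Longrightarrow> ext_eqv G u' v' \<Longrightarrow> ext_eqv G (u @ u') (v @ v')"
  by (meson ext_eqv.trans ext_eqv_append_left ext_eqv_append_right)

lemma ext_class_eq_iff: "ext_class G u = ext_class G v \<longleftrightarrow> ext_eqv G u v"
  unfolding ext_class_def by (auto intro: ext_eqv.refl ext_eqv.sym ext_eqv.trans)

lemma ext_class_self: "w \<in> ext_class G w"
  by (simp add: ext_class_def ext_eqv.refl)

lemma some_ext_class: "ext_eqv G (SOME v. v \<in> ext_class G w) w"
  using someI[of "\<lambda>v. v \<in> ext_class G w", OF ext_class_self] by (simp add: ext_class_def)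

lemma ext_mult_ext_class: "ext_mult G (ext_class G u) (ext_class G v) = ext_class G (u @ v)"
  unfolding ext_mult_def ext_class_def
  by (auto intro: ext_eqv.refl ext_eqv.trans ext_eqv_append)

definition word_inv :: "'a ext_word \<Rightarrow> 'a ext_word" where
  "word_inv w = rev (map (\<lambda>(l, b). (l, \<not> b)) w)"

lemma word_inv_Cons: "word_inv (a # w) = word_inv w @ [(fst a, \<not> snd a)]"
  by (cases a) (simp add: word_inv_def)

lemma good_word_Nil [simp]: "good_word G []"
  by (simp add: good_word_def)

lemma good_word_append [simp]: "good_word G (u @ v) \<longleftrightarrow> good_word G u \<and> good_word G v"
  by (auto simp add: good_word_def)

lemma good_word_Cons:
  "good_word G (a # w) \<longleftrightarrow> fst (fst a) \<in> carrier G \<and> snd (fst a) \<in> carrier G \<and> good_word G w"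
  by (auto simp add: good_word_def)

lemma good_word_inv [simp]: "good_word G (word_inv w) \<longleftrightarrow> good_word G w"
  by (auto simp add: good_word_def word_inv_def)

lemma ext_eqv_word_inv_append: "good_word G w \<Longrightarrow> ext_eqv G (word_inv w @ w) []"
proof (induction w)
  case Nil
  then show ?case by (simp add: word_inv_def ext_eqv.refl)
next
  case (Cons a w)
  obtain g h b where a: "a = ((g, h), b)" by (metis prod.collapse)
  from Cons.prems a have gh: "g \<in> carrier G" "h \<in> carrier G" "good_word G w"
    by (auto simp add: good_word_Cons)
  have "ext_eqv G (word_inv w @ [((g, h), \<not> b), ((g, h), \<not> \<not> b)] @ w) (word_inv w @ [] @ w)"
    by (rule ext_eqv.cong[OF ext_eqv.cancel[OF gh(1,2)]])
  then show ?case
    using Cons.IH[OF gh(3)] by (auto simp add: word_inv_Cons a intro: ext_eqv.trans)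
qed

lemma carrier_exterior_square: "carrier (exterior_square G) = ext_class G ` {w. good_word G w}"
  by (simp add: exterior_square_def)

lemma one_exterior_square: "\<one>\<^bsub>exterior_square G\<^esub> = ext_class G []"
  by (simp add: exterior_square_def)

lemma exterior_square_mult_class:
  "ext_class G u \<otimes>\<^bsub>exterior_square G\<^esub> ext_class G v = ext_class G (u @ v)"
  by (simp add: exterior_square_def ext_mult_ext_class)

lemma ext_class_closed: "good_word G w \<Longrightarrow> ext_class G w \<in> carrier (exterior_square G)"
  by (simp add: carrier_exterior_square)

lemma group_exterior_square: "group (exterior_square G)"
proof (rule groupI)
  fix x assume "x \<in> carrier (exterior_square G)"
  then obtain w where w: "good_word G w" "x = ext_class G w"
    by (auto simp add: carrier_exterior_square)
  show "\<exists>y\<in>carrier (exterior_square G). y \<otimes>\<^bsub>exterior_square G\<^esub> x = \<one>\<^bsub>exterior_square G\<^esub>"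
  proof
    show "ext_class G (word_inv w) \<otimes>\<^bsub>exterior_square G\<^esub> x = \<one>\<^bsub>exterior_square G\<^esub>"
      using w ext_eqv_word_inv_append[OF w(1)]
      by (simp add: exterior_square_mult_class one_exterior_square ext_class_eq_iff)
  qed (use w in \<open>simp add: ext_class_closed\<close>)
qed (auto simp add: carrier_exterior_square exterior_square_mult_class one_exterior_square)

definition wedge :: "('a, 'b) monoid_scheme \<Rightarrow> 'a \<Rightarrow> 'a \<Rightarrow> 'a ext_word set" where
  "wedge G g h = ext_class G (gen g h)"

lemma wedge_closed [simp]:
  "g \<in> carrier G \<Longrightarrow> h \<in> carrier G \<Longrightarrow> wedge G g h \<in> carrier (exterior_square G)"
  unfolding wedge_def by (rule ext_class_closed) (simp add: good_word_def gen_def)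

lemma exterior_square_induct [consumes 1, case_names one mult_wedge mult_inv_wedge]:
  assumes "x \<in> carrier (exterior_square G)"
    and "P \<one>\<^bsub>exterior_square G\<^esub>"
    and "\<And>A g h. A \<in> carrier (exterior_square G) \<Longrightarrow> P A \<Longrightarrow> g \<in> carrier G \<Longrightarrow> h \<in> carrier G \<Longrightarrow>
           P (A \<otimes>\<^bsub>exterior_square G\<^esub> wedge G g h)"
    and "\<And>A g h. A \<in> carrier (exterior_square G) \<Longrightarrow> P A \<Longrightarrow> g \<in> carrier G \<Longrightarrow> h \<in> carrier G \<Longrightarrow>
           P (A \<otimes>\<^bsub>exterior_square G\<^esub> inv\<^bsub>exterior_square G\<^esub> (wedge G g h))"
  shows "P x"
proof -
  interpret W: group "exterior_square G" by (rule group_exterior_square)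
  obtain w where w: "good_word G w" "x = ext_class G w"
    using assms(1) by (auto simp add: carrier_exterior_square)
  have "P (ext_class G w)" using w(1)
  proof (induction w rule: rev_induct)
    case Nil
    then show ?case using assms(2) by (simp add: one_exterior_square)
  next
    case (snoc a w)
    obtain g h b where a: "a = ((g, h), b)" by (metis prod.collapse)
    from snoc.prems a have gh: "g \<in> carrier G" "h \<in> carrier G" and w: "good_word G w"
      by (auto simp add: good_word_def)
    have Pw: "P (ext_class G w)" and cw: "ext_class G w \<in> carrier (exterior_square G)"
      using snoc.IH w by (simp_all add: ext_class_closed)
    have split: "ext_class G (w @ [a]) = ext_class G w \<otimes>\<^bsub>exterior_square G\<^esub> ext_class G [a]"
      by (simp add: exterior_square_mult_class)
    show ?case
    proof (cases b)
      case True
      then show ?thesis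
        using assms(3)[OF cw Pw gh] split by (simp add: wedge_def gen_def a)
    next
      case False
      have "ext_class G [a] \<otimes>\<^bsub>exterior_square G\<^esub> wedge G g h = \<one>\<^bsub>exterior_square G\<^esub>"
        using ext_eqv.cancel[OF gh, of False]
        by (simp add: wedge_def gen_def exterior_square_mult_class one_exterior_square
            ext_class_eq_iff a False)
      then have "ext_class G [a] = inv\<^bsub>exterior_square G\<^esub> (wedge G g h)"
        using gh w by (simp add: W.inv_equality ext_class_closed good_word_def a)
      then show ?thesis using assms(4)[OF cw Pw gh] split by simp
    qed
  qed
  then show ?thesis using w by simp
qed

section \<open>The crossed module structure of the exterior square\<close>

definition word_conj :: "('a, 'b) monoid_scheme \<Rightarrow> 'a \<Rightarrow> 'a ext_word \<Rightarrow> 'a ext_word" where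
  "word_conj G x w = map (\<lambda>((g, h), b). ((conjg G x g, conjg G x h), b)) w"

text \<open>The action and the commutator map are defined on a chosen representative of a class;
  \<open>ext_act_class\<close> and \<open>commutator_map_class\<close> show that the choice does not matter.\<close>
definition ext_act :: "('a, 'b) monoid_scheme \<Rightarrow> 'a \<Rightarrow> 'a ext_word set \<Rightarrow> 'a ext_word set" where
  "ext_act G x A = ext_class G (word_conj G x (SOME w. w \<in> A))"

definition letter_commutator :: "('a, 'b) monoid_scheme \<Rightarrow> ('a \<times> 'a) \<times> bool \<Rightarrow> 'a" where
  "letter_commutator G a = (case a of ((g, h), b) \<Rightarrow>
     (if g \<in> carrier G \<and> h \<in> carrier G
      then (if b then commutator G g h else inv\<^bsub>G\<^esub> (commutator G g h)) else \<one>\<^bsub>G\<^esub>))"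

fun word_commutator :: "('a, 'b) monoid_scheme \<Rightarrow> 'a ext_word \<Rightarrow> 'a" where
  "word_commutator G [] = \<one>\<^bsub>G\<^esub>"
| "word_commutator G (a # w) = letter_commutator G a \<otimes>\<^bsub>G\<^esub> word_commutator G w"

definition commutator_map :: "('a, 'b) monoid_scheme \<Rightarrow> 'a ext_word set \<Rightarrow> 'a" where
  "commutator_map G A = word_commutator G (SOME w. w \<in> A)"

context group
begin

abbreviation W where "W \<equiv> exterior_square G"

interpretation W: group W by (rule group_exterior_square)

lemma word_conj_append: "word_conj G x (u @ v) = word_conj G x u @ word_conj G x v"
  by (simp add: word_conj_def)

lemma word_conj_gen: "word_conj G x (gen g h) = gen (conjg G x g) (conjg G x h)"
  by (simp add: word_conj_def gen_def)

lemma ext_eqv_word_conj: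
  assumes x: "x \<in> carrier G" and "ext_eqv G u v"
  shows "ext_eqv G (word_conj G x u) (word_conj G x v)"
  using assms(2)
proof (induction rule: ext_eqv.induct)
  case (cong u v a b)
  then show ?case by (simp add: word_conj_append ext_eqv.cong)
next
  case (cancel g h e)
  then show ?case
    using ext_eqv.cancel[of "conjg G x g" G "conjg G x h" e] x by (simp add: word_conj_def)
next
  case (rel_left g g' h)
  have "conjg G (conjg G x g) (conjg G x g') = conjg G x (conjg G g g')"
    "conjg G (conjg G x g) (conjg G x h) = conjg G x (conjg G g h)"
    using rel_left x by (simp_all add: conjg_def m_assoc inv_mult_group)
  then show ?case
    using rel_left x ext_eqv.rel_left[of "conjg G x g" G "conjg G x g'" "conjg G x h"]
    by (simp add: word_conj_gen word_conj_append conjg_mult)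
next
  case (rel_right g h h')
  have "conjg G (conjg G x h) (conjg G x g) = conjg G x (conjg G h g)"
    "conjg G (conjg G x h) (conjg G x h') = conjg G x (conjg G h h')"
    using rel_right x by (simp_all add: conjg_def m_assoc inv_mult_group)
  then show ?case
    using rel_right x ext_eqv.rel_right[of "conjg G x g" G "conjg G x h" "conjg G x h'"]
    by (simp add: word_conj_gen word_conj_append conjg_mult)
next
  case (rel_ext y)
  then show ?case
    using x ext_eqv.rel_ext[of "conjg G x y" G] unfolding word_conj_gen by (simp add: word_conj_def)
qed (auto intro: ext_eqv.intros)

lemma good_word_conj: "x \<in> carrier G \<Longrightarrow> good_word G w \<Longrightarrow> good_word G (word_conj G x w)"
  by (auto simp add: good_word_def word_conj_def)

lemma word_conj_conj: "x \<in> carrier G \<Longrightarrow> y \<in> carrier G \<Longrightarrow> good_word G w \<Longrightarrow>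
    word_conj G x (word_conj G y w) = word_conj G (x \<otimes> y) w"
  by (auto simp add: word_conj_def good_word_def conjg_conjg split: prod.splits)

lemma ext_act_class: "x \<in> carrier G \<Longrightarrow> ext_act G x (ext_class G w) = ext_class G (word_conj G x w)"
  unfolding ext_act_def ext_class_eq_iff by (rule ext_eqv_word_conj[OF _ some_ext_class])

lemma ext_act_closed [simp]: "x \<in> carrier G \<Longrightarrow> A \<in> carrier W \<Longrightarrow> ext_act G x A \<in> carrier W"
  by (auto simp add: carrier_exterior_square ext_act_class good_word_conj)

lemma ext_act_mult: "x \<in> carrier G \<Longrightarrow> A \<in> carrier W \<Longrightarrow> B \<in> carrier W \<Longrightarrow>
    ext_act G x (A \<otimes>\<^bsub>W\<^esub> B) = ext_act G x A \<otimes>\<^bsub>W\<^esub> ext_act G x B"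
  by (auto simp add: carrier_exterior_square ext_act_class exterior_square_mult_class word_conj_append)

lemma ext_act_wedge: "x \<in> carrier G \<Longrightarrow> ext_act G x (wedge G g h) = wedge G (conjg G x g) (conjg G x h)"
  by (simp add: wedge_def ext_act_class word_conj_gen)

lemma ext_act_act: "x \<in> carrier G \<Longrightarrow> y \<in> carrier G \<Longrightarrow> A \<in> carrier W \<Longrightarrow>
    ext_act G x (ext_act G y A) = ext_act G (x \<otimes> y) A"
  by (auto simp add: carrier_exterior_square ext_act_class word_conj_conj good_word_conj)

lemma ext_act_one: "A \<in> carrier W \<Longrightarrow> ext_act G \<one> A = A"
proof -
  assume "A \<in> carrier W"
  then obtain w where w: "good_word G w" "A = ext_class G w" by (auto simp add: carrier_exterior_square)
  have "word_conj G \<one> w = w" using w(1)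
    by (induction w) (auto simp add: word_conj_def good_word_def)
  then show ?thesis using w by (simp add: ext_act_class)
qed

lemma ext_act_hom: "x \<in> carrier G \<Longrightarrow> ext_act G x \<in> hom W W"
  by (rule homI) (simp_all add: ext_act_mult)

lemma ext_act_W_one: "x \<in> carrier G \<Longrightarrow> ext_act G x \<one>\<^bsub>W\<^esub> = \<one>\<^bsub>W\<^esub>"
  using group_hom.hom_one[OF group_hom.intro[OF W.is_group W.is_group]] ext_act_hom
  by (simp add: group_hom_axioms_def)

lemma ext_act_inv: "x \<in> carrier G \<Longrightarrow> A \<in> carrier W \<Longrightarrow>
    ext_act G x (inv\<^bsub>W\<^esub> A) = inv\<^bsub>W\<^esub> (ext_act G x A)"
  using group_hom.hom_inv[OF group_hom.intro[OF W.is_group W.is_group]] ext_act_hom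
  by (simp add: group_hom_axioms_def)

lemma ext_act_inv_act: "x \<in> carrier G \<Longrightarrow> A \<in> carrier W \<Longrightarrow> ext_act G (inv x) (ext_act G x A) = A"
  by (simp add: ext_act_act ext_act_one)

lemma ext_act_act_inv: "x \<in> carrier G \<Longrightarrow> A \<in> carrier W \<Longrightarrow> ext_act G x (ext_act G (inv x) A) = A"
  by (simp add: ext_act_act ext_act_one)

lemma ext_act_eq_iff: "x \<in> carrier G \<Longrightarrow> A \<in> carrier W \<Longrightarrow> B \<in> carrier W \<Longrightarrow>
    ext_act G x A = ext_act G x B \<longleftrightarrow> A = B"
  by (metis ext_act_inv_act)

lemma word_commutator_closed [simp]: "word_commutator G w \<in> carrier G"
  by (induction w) (auto simp add: letter_commutator_def split: prod.splits)

lemma word_commutator_append: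
  "word_commutator G (u @ v) = word_commutator G u \<otimes> word_commutator G v"
  by (induction u) (auto simp add: m_assoc letter_commutator_def split: prod.splits)

lemma word_commutator_eqv: "ext_eqv G u v \<Longrightarrow> word_commutator G u = word_commutator G v"
proof (induction rule: ext_eqv.induct)
  case (cong u v a b)
  then show ?case by (simp add: word_commutator_append)
next
  case (cancel g h e)
  then show ?case by (cases e) (simp_all add: m_assoc letter_commutator_def)
next
  case (rel_left g g' h)
  then show ?case by (simp add: gen_def commutator_mult_left m_assoc letter_commutator_def)
next
  case (rel_right g h h')
  then show ?case by (simp add: gen_def commutator_mult_right m_assoc letter_commutator_def)
qed (simp_all add: gen_def letter_commutator_def)

lemma commutator_map_class: "commutator_map G (ext_class G w) = word_commutator G w"
  unfolding commutator_map_def by (rule word_commutator_eqv[OF some_ext_class])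

lemma commutator_map_closed [simp]: "commutator_map G A \<in> carrier G"
  by (simp add: commutator_map_def)

lemma commutator_map_mult: "A \<in> carrier W \<Longrightarrow> B \<in> carrier W \<Longrightarrow>
    commutator_map G (A \<otimes>\<^bsub>W\<^esub> B) = commutator_map G A \<otimes> commutator_map G B"
  by (auto simp add: carrier_exterior_square exterior_square_mult_class commutator_map_class
      word_commutator_append)

lemma commutator_map_wedge:
  "g \<in> carrier G \<Longrightarrow> h \<in> carrier G \<Longrightarrow> commutator_map G (wedge G g h) = commutator G g h"
  by (simp add: wedge_def commutator_map_class gen_def letter_commutator_def)

lemma commutator_map_hom: "commutator_map G \<in> hom W G"
  by (rule homI) (simp_all add: commutator_map_mult)

lemma commutator_map_one: "commutator_map G \<one>\<^bsub>W\<^esub> = \<one>"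
  by (simp add: one_exterior_square commutator_map_class)

lemma commutator_map_inv: "A \<in> carrier W \<Longrightarrow> commutator_map G (inv\<^bsub>W\<^esub> A) = inv (commutator_map G A)"
  using group_hom.hom_inv[OF group_hom.intro[OF W.is_group is_group]] commutator_map_hom
  by (simp add: group_hom_axioms_def)

lemma commutator_map_in_DG: "w \<in> carrier W \<Longrightarrow> commutator_map G w \<in> DG"
  by (induction rule: exterior_square_induct)
    (simp_all add: commutator_map_one commutator_map_mult commutator_map_inv commutator_map_wedge
      DG_one DG_mult DG_inv commutator_in_DG)

lemma wedge_mult_left: "g \<in> carrier G \<Longrightarrow> g' \<in> carrier G \<Longrightarrow> h \<in> carrier G \<Longrightarrow>
   wedge G (g \<otimes> g') h = wedge G (conjg G g g') (conjg G g h) \<otimes>\<^bsub>W\<^esub> wedge G g h"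
  unfolding wedge_def exterior_square_mult_class ext_class_eq_iff by (rule ext_eqv.rel_left)

lemma wedge_mult_right: "g \<in> carrier G \<Longrightarrow> h \<in> carrier G \<Longrightarrow> h' \<in> carrier G \<Longrightarrow>
   wedge G g (h \<otimes> h') = wedge G g h \<otimes>\<^bsub>W\<^esub> wedge G (conjg G h g) (conjg G h h')"
  unfolding wedge_def exterior_square_mult_class ext_class_eq_iff by (rule ext_eqv.rel_right)

lemma wedge_self [simp]: "x \<in> carrier G \<Longrightarrow> wedge G x x = \<one>\<^bsub>W\<^esub>"
  unfolding wedge_def one_exterior_square ext_class_eq_iff by (rule ext_eqv.rel_ext)

lemma wedge_mult_left_act: "g \<in> carrier G \<Longrightarrow> g' \<in> carrier G \<Longrightarrow> h \<in> carrier G \<Longrightarrow>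
   wedge G (g \<otimes> g') h = ext_act G g (wedge G g' h) \<otimes>\<^bsub>W\<^esub> wedge G g h"
  by (simp add: wedge_mult_left ext_act_wedge)

lemma wedge_mult_right_act: "g \<in> carrier G \<Longrightarrow> h \<in> carrier G \<Longrightarrow> h' \<in> carrier G \<Longrightarrow>
   wedge G g (h \<otimes> h') = wedge G g h \<otimes>\<^bsub>W\<^esub> ext_act G h (wedge G g h')"
  by (simp add: wedge_mult_right ext_act_wedge)

lemma wedge_one_left [simp]: "h \<in> carrier G \<Longrightarrow> wedge G \<one> h = \<one>\<^bsub>W\<^esub>"
  using wedge_mult_left[of \<one> \<one> h] by simp

lemma wedge_one_right [simp]: "g \<in> carrier G \<Longrightarrow> wedge G g \<one> = \<one>\<^bsub>W\<^esub>"
  using wedge_mult_right[of g \<one> \<one>] by simp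

lemma exterior_square_hom_eqI:
  assumes f: "f \<in> hom W H" and g: "g \<in> hom W H" and H: "group H"
    and eq: "\<And>a b. a \<in> carrier G \<Longrightarrow> b \<in> carrier G \<Longrightarrow> f (wedge G a b) = g (wedge G a b)"
    and A: "A \<in> carrier W"
  shows "f A = g A"
proof -
  interpret f: group_hom W H f by (intro group_hom.intro group_hom_axioms.intro W.is_group H f)
  interpret g: group_hom W H g by (intro group_hom.intro group_hom_axioms.intro W.is_group H g)
  show ?thesis using A by (induction rule: exterior_square_induct) (simp_all add: eq)
qed

lemma wedge_swap: "g \<in> carrier G \<Longrightarrow> h \<in> carrier G \<Longrightarrow> wedge G h g = inv\<^bsub>W\<^esub> (wedge G g h)"
proof -
  assume g: "g \<in> carrier G" and h: "h \<in> carrier G"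
  have "ext_act G g (wedge G h g \<otimes>\<^bsub>W\<^esub> wedge G g h)
      = ext_act G g (wedge G h (g \<otimes> h)) \<otimes>\<^bsub>W\<^esub> wedge G g (g \<otimes> h)"
    using g h by (simp add: ext_act_mult wedge_mult_right_act ext_act_W_one)
  also have "\<dots> = ext_act G g \<one>\<^bsub>W\<^esub>"
    using g h by (simp add: wedge_mult_left_act[symmetric] ext_act_W_one)
  finally have "wedge G h g \<otimes>\<^bsub>W\<^esub> wedge G g h = \<one>\<^bsub>W\<^esub>"
    using g h by (simp add: ext_act_eq_iff)
  then show ?thesis using g h by (simp add: W.inv_equality)
qed

lemma ext_act_mult_wedge_commute:
  assumes g: "g \<in> carrier G" and h: "h \<in> carrier G" and g': "g' \<in> carrier G" and h': "h' \<in> carrier G"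
  shows "ext_act G (g \<otimes> h) (wedge G g' h') \<otimes>\<^bsub>W\<^esub> wedge G g h
       = wedge G g h \<otimes>\<^bsub>W\<^esub> ext_act G (h \<otimes> g) (wedge G g' h')"
proof -
  define u where "u = ext_act G g (wedge G g' h)"
  define v where "v = ext_act G h (wedge G g h')"
  have uv: "u \<in> carrier W" "v \<in> carrier W" using assms by (simp_all add: u_def v_def)
  \<comment> \<open>expand \<open>g g' \<and> h h'\<close> first in the second and then in the first argument, and conversely\<close>
  have E1: "wedge G (g \<otimes> g') (h \<otimes> h')
      = u \<otimes>\<^bsub>W\<^esub> (ext_act G (g \<otimes> h) (wedge G g' h') \<otimes>\<^bsub>W\<^esub> wedge G g h) \<otimes>\<^bsub>W\<^esub> v"
    using assms by (subst wedge_mult_left_act)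
      (simp_all add: wedge_mult_right_act ext_act_mult ext_act_act W.m_assoc u_def v_def)
  have E2: "wedge G (g \<otimes> g') (h \<otimes> h')
      = u \<otimes>\<^bsub>W\<^esub> (wedge G g h \<otimes>\<^bsub>W\<^esub> ext_act G (h \<otimes> g) (wedge G g' h')) \<otimes>\<^bsub>W\<^esub> v"
    using assms by (subst wedge_mult_right_act)
      (simp_all add: wedge_mult_left_act ext_act_mult ext_act_act W.m_assoc u_def v_def)
  from E1[symmetric] E2 have "u \<otimes>\<^bsub>W\<^esub> (ext_act G (g \<otimes> h) (wedge G g' h') \<otimes>\<^bsub>W\<^esub> wedge G g h) \<otimes>\<^bsub>W\<^esub> v
      = u \<otimes>\<^bsub>W\<^esub> (wedge G g h \<otimes>\<^bsub>W\<^esub> ext_act G (h \<otimes> g) (wedge G g' h')) \<otimes>\<^bsub>W\<^esub> v"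
    by (rule HOL.trans)
  then show ?thesis
    by (simp only: W.right_cancel W.Units_l_cancel W.Units_eq W.m_closed wedge_closed ext_act_closed
        m_closed assms uv)
qed

lemma ext_act_commutator_wedge:
  assumes g: "g \<in> carrier G" and h: "h \<in> carrier G" and a: "a \<in> carrier G" and b: "b \<in> carrier G"
  shows "ext_act G (commutator G g h) (wedge G a b) \<otimes>\<^bsub>W\<^esub> wedge G g h = wedge G g h \<otimes>\<^bsub>W\<^esub> wedge G a b"
proof -
  define k where "k = inv (h \<otimes> g)"
  have k: "k \<in> carrier G" using g h by (simp add: k_def)
  have "ext_act G (h \<otimes> g) (wedge G (conjg G k a) (conjg G k b)) = wedge G a b"
    using g h a b k by (simp add: ext_act_wedge conjg_conjg k_def)
  moreover have "ext_act G (g \<otimes> h) (wedge G (conjg G k a) (conjg G k b))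
      = ext_act G (commutator G g h) (wedge G a b)"
    using g h a b k by (simp add: ext_act_wedge conjg_conjg commutator_eq k_def m_assoc)
  ultimately show ?thesis
    using ext_act_mult_wedge_commute[OF g h, of "conjg G k a" "conjg G k b"] a b k by simp
qed

lemma wedge_conj_eq_ext_act:
  assumes g: "g \<in> carrier G" and h: "h \<in> carrier G" and V: "V \<in> carrier W"
  shows "wedge G g h \<otimes>\<^bsub>W\<^esub> V \<otimes>\<^bsub>W\<^esub> inv\<^bsub>W\<^esub> (wedge G g h) = ext_act G (commutator G g h) V"
proof -
  define w where "w = wedge G g h"
  have w: "w \<in> carrier W" using g h by (simp add: w_def)
  have conj_hom: "(\<lambda>V. w \<otimes>\<^bsub>W\<^esub> V \<otimes>\<^bsub>W\<^esub> inv\<^bsub>W\<^esub> w) \<in> hom W W"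
    by (rule homI) (use w in \<open>simp_all add: W.m_assoc\<close>)
  show ?thesis unfolding w_def[symmetric]
  proof (rule exterior_square_hom_eqI[OF conj_hom ext_act_hom[OF commutator_closed[OF g h]] W.is_group _ V])
    fix a b assume a: "a \<in> carrier G" and b: "b \<in> carrier G"
    then show "w \<otimes>\<^bsub>W\<^esub> wedge G a b \<otimes>\<^bsub>W\<^esub> inv\<^bsub>W\<^esub> w = ext_act G (commutator G g h) (wedge G a b)"
      using ext_act_commutator_wedge[OF g h a b] w g h by (simp add: w_def[symmetric] W.inv_solve_right')
  qed
qed

lemma inv_wedge_conj_eq_ext_act:
  assumes g: "g \<in> carrier G" and h: "h \<in> carrier G" and V: "V \<in> carrier W"
  shows "inv\<^bsub>W\<^esub> (wedge G g h) \<otimes>\<^bsub>W\<^esub> V \<otimes>\<^bsub>W\<^esub> wedge G g h = ext_act G (inv (commutator G g h)) V"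
proof -
  define V' where "V' = ext_act G (inv (commutator G g h)) V"
  have V': "V' \<in> carrier W" using g h V by (simp add: V'_def)
  have "V = wedge G g h \<otimes>\<^bsub>W\<^esub> V' \<otimes>\<^bsub>W\<^esub> inv\<^bsub>W\<^esub> (wedge G g h)"
    using wedge_conj_eq_ext_act[OF g h V'] g h V by (simp add: V'_def ext_act_act_inv)
  then have "inv\<^bsub>W\<^esub> (wedge G g h) \<otimes>\<^bsub>W\<^esub> V \<otimes>\<^bsub>W\<^esub> wedge G g h
      = inv\<^bsub>W\<^esub> (wedge G g h) \<otimes>\<^bsub>W\<^esub> (wedge G g h \<otimes>\<^bsub>W\<^esub> V' \<otimes>\<^bsub>W\<^esub> inv\<^bsub>W\<^esub> (wedge G g h)) \<otimes>\<^bsub>W\<^esub> wedge G g h"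
    by simp
  then show ?thesis using g h V' by (simp add: V'_def[symmetric] W.m_assoc)
qed

lemma conj_eq_ext_act_commutator_map:
  assumes w: "w \<in> carrier W" and V: "V \<in> carrier W"
  shows "w \<otimes>\<^bsub>W\<^esub> V \<otimes>\<^bsub>W\<^esub> inv\<^bsub>W\<^esub> w = ext_act G (commutator_map G w) V"
  using w V
proof (induction arbitrary: V rule: exterior_square_induct)
  case one
  then show ?case by (simp add: commutator_map_one ext_act_one)
next
  case (mult_wedge A g h)
  have "A \<otimes>\<^bsub>W\<^esub> wedge G g h \<otimes>\<^bsub>W\<^esub> V \<otimes>\<^bsub>W\<^esub> inv\<^bsub>W\<^esub> (A \<otimes>\<^bsub>W\<^esub> wedge G g h)
      = A \<otimes>\<^bsub>W\<^esub> (wedge G g h \<otimes>\<^bsub>W\<^esub> V \<otimes>\<^bsub>W\<^esub> inv\<^bsub>W\<^esub> (wedge G g h)) \<otimes>\<^bsub>W\<^esub> inv\<^bsub>W\<^esub> A"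
    using mult_wedge by (simp add: W.m_assoc W.inv_mult_group)
  then show ?case
    using mult_wedge by (simp add: wedge_conj_eq_ext_act ext_act_act commutator_map_mult commutator_map_wedge)
next
  case (mult_inv_wedge A g h)
  have "A \<otimes>\<^bsub>W\<^esub> inv\<^bsub>W\<^esub> (wedge G g h) \<otimes>\<^bsub>W\<^esub> V \<otimes>\<^bsub>W\<^esub> inv\<^bsub>W\<^esub> (A \<otimes>\<^bsub>W\<^esub> inv\<^bsub>W\<^esub> (wedge G g h))
      = A \<otimes>\<^bsub>W\<^esub> (inv\<^bsub>W\<^esub> (wedge G g h) \<otimes>\<^bsub>W\<^esub> V \<otimes>\<^bsub>W\<^esub> wedge G g h) \<otimes>\<^bsub>W\<^esub> inv\<^bsub>W\<^esub> A"
    using mult_inv_wedge by (simp add: W.m_assoc W.inv_mult_group)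
  then show ?case
    using mult_inv_wedge
    by (simp add: inv_wedge_conj_eq_ext_act ext_act_act commutator_map_mult commutator_map_inv
        commutator_map_wedge)
qed

lemma wedge_inv_right: "a \<in> carrier G \<Longrightarrow> h \<in> carrier G \<Longrightarrow>
    wedge G a (inv h) = ext_act G (inv h) (inv\<^bsub>W\<^esub> (wedge G a h))"
proof -
  assume a: "a \<in> carrier G" and h: "h \<in> carrier G"
  have "wedge G a h \<otimes>\<^bsub>W\<^esub> ext_act G h (wedge G a (inv h)) = \<one>\<^bsub>W\<^esub>"
    using a h wedge_mult_right_act[of a h "inv h"] by simp
  then have "ext_act G h (wedge G a (inv h)) = inv\<^bsub>W\<^esub> (wedge G a h)"
    using a h by (simp add: W.inv_solve_left' W.inv_equality[symmetric] W.inv_comm)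
  then show ?thesis using a h by (metis ext_act_inv_act inv_closed wedge_closed)
qed

lemma ext_act_wedge_eq:
  assumes a: "a \<in> carrier G" and g: "g \<in> carrier G" and h: "h \<in> carrier G"
  shows "ext_act G a (wedge G g h) = wedge G a (commutator G g h) \<otimes>\<^bsub>W\<^esub> wedge G g h"
proof -
  define c where "c = commutator G g h"
  have c: "c \<in> carrier G" and c_eq: "c = conjg G g h \<otimes> inv h"
    using g h by (simp_all add: c_def commutator_def conjg_def m_assoc)
  have "wedge G (a \<otimes> g) h = wedge G a (conjg G g h) \<otimes>\<^bsub>W\<^esub> wedge G g h"
    using wedge_mult_left[of g "inv g \<otimes> a \<otimes> g" h] a g h by (simp add: conjg_def m_assoc)
  then have "ext_act G a (wedge G g h) \<otimes>\<^bsub>W\<^esub> wedge G a h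
      = wedge G a (conjg G g h) \<otimes>\<^bsub>W\<^esub> wedge G g h"
    using a g h by (simp add: wedge_mult_left_act)
  then have "wedge G a (conjg G g h) \<otimes>\<^bsub>W\<^esub> wedge G g h \<otimes>\<^bsub>W\<^esub> inv\<^bsub>W\<^esub> (wedge G a h)
      = ext_act G a (wedge G g h)"
    using a g h by (simp add: W.inv_solve_right')
  moreover have "wedge G a c
      = wedge G a (conjg G g h) \<otimes>\<^bsub>W\<^esub> (wedge G g h \<otimes>\<^bsub>W\<^esub> inv\<^bsub>W\<^esub> (wedge G a h) \<otimes>\<^bsub>W\<^esub> inv\<^bsub>W\<^esub> (wedge G g h))"
    using a g h c wedge_conj_eq_ext_act[OF g h, of "inv\<^bsub>W\<^esub> (wedge G a h)"]
    by (simp add: c_eq wedge_mult_right_act wedge_inv_right ext_act_act c_def[symmetric])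
  ultimately have "wedge G a c = ext_act G a (wedge G g h) \<otimes>\<^bsub>W\<^esub> inv\<^bsub>W\<^esub> (wedge G g h)"
    using a g h by (simp add: W.m_assoc[symmetric])
  then show ?thesis using a g h c by (simp add: c_def[symmetric] W.m_assoc)
qed

lemma ext_act_eq:
  assumes a: "a \<in> carrier G" and w: "w \<in> carrier W"
  shows "ext_act G a w = wedge G a (commutator_map G w) \<otimes>\<^bsub>W\<^esub> w"
  using w
proof (induction rule: exterior_square_induct)
  case one
  then show ?case using a by (simp add: ext_act_W_one commutator_map_one)
next
  case (mult_wedge A g h)
  define c where "c = commutator G g h"
  have c: "c \<in> carrier G" using mult_wedge by (simp add: c_def)
  have "ext_act G a (A \<otimes>\<^bsub>W\<^esub> wedge G g h)
      = wedge G a (commutator_map G A) \<otimes>\<^bsub>W\<^esub> (A \<otimes>\<^bsub>W\<^esub> wedge G a c \<otimes>\<^bsub>W\<^esub> inv\<^bsub>W\<^esub> A) \<otimes>\<^bsub>W\<^esub> (A \<otimes>\<^bsub>W\<^esub> wedge G g h)"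
    using mult_wedge a c by (simp add: ext_act_mult ext_act_wedge_eq c_def[symmetric] W.m_assoc)
  also have "\<dots> = wedge G a (commutator_map G (A \<otimes>\<^bsub>W\<^esub> wedge G g h)) \<otimes>\<^bsub>W\<^esub> (A \<otimes>\<^bsub>W\<^esub> wedge G g h)"
    using mult_wedge a c
    by (simp add: conj_eq_ext_act_commutator_map wedge_mult_right_act[symmetric] commutator_map_mult
        commutator_map_wedge c_def)
  finally show ?case .
next
  case (mult_inv_wedge A g h)
  define c where "c = commutator G g h"
  have c: "c \<in> carrier G" using mult_inv_wedge by (simp add: c_def)
  have inv_c: "wedge G a (inv c)
      = inv\<^bsub>W\<^esub> (wedge G g h) \<otimes>\<^bsub>W\<^esub> inv\<^bsub>W\<^esub> (wedge G a c) \<otimes>\<^bsub>W\<^esub> wedge G g h"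
    using wedge_inv_right[OF a c] inv_wedge_conj_eq_ext_act[of g h "inv\<^bsub>W\<^esub> (wedge G a c)"] mult_inv_wedge a c
    by (simp add: c_def)
  have "ext_act G a (A \<otimes>\<^bsub>W\<^esub> inv\<^bsub>W\<^esub> (wedge G g h))
      = wedge G a (commutator_map G A) \<otimes>\<^bsub>W\<^esub> (A \<otimes>\<^bsub>W\<^esub> wedge G a (inv c) \<otimes>\<^bsub>W\<^esub> inv\<^bsub>W\<^esub> A)
        \<otimes>\<^bsub>W\<^esub> (A \<otimes>\<^bsub>W\<^esub> inv\<^bsub>W\<^esub> (wedge G g h))"
    using mult_inv_wedge a c
    by (simp add: ext_act_mult ext_act_inv ext_act_wedge_eq c_def[symmetric] inv_c W.m_assoc
        W.inv_mult_group)
  also have "\<dots> = wedge G a (commutator_map G (A \<otimes>\<^bsub>W\<^esub> inv\<^bsub>W\<^esub> (wedge G g h)))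
        \<otimes>\<^bsub>W\<^esub> (A \<otimes>\<^bsub>W\<^esub> inv\<^bsub>W\<^esub> (wedge G g h))"
    using mult_inv_wedge a c
    by (simp add: conj_eq_ext_act_commutator_map wedge_mult_right_act[symmetric] commutator_map_mult
        commutator_map_inv commutator_map_wedge c_def)
  finally show ?case .
qed

lemma commutator_map_one_imp_center:
  assumes w: "w \<in> carrier W" and "commutator_map G w = \<one>"
  shows "w \<in> group_center W"
proof -
  have "w \<otimes>\<^bsub>W\<^esub> V = V \<otimes>\<^bsub>W\<^esub> w" if V: "V \<in> carrier W" for V
  proof -
    have "w \<otimes>\<^bsub>W\<^esub> V \<otimes>\<^bsub>W\<^esub> inv\<^bsub>W\<^esub> w = V"
      using conj_eq_ext_act_commutator_map[OF w V] assms V by (simp add: ext_act_one)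
    then show ?thesis using w V by (simp add: W.inv_solve_right')
  qed
  then show ?thesis using w by (simp add: group_center_def)
qed

lemma commutator_exterior_square:
  assumes w: "w \<in> carrier W" and V: "V \<in> carrier W"
  shows "commutator W w V = wedge G (commutator_map G w) (commutator_map G V)"
  using conj_eq_ext_act_commutator_map[OF w V] ext_act_eq[OF commutator_map_closed V] w V
  by (simp add: commutator_def W.m_assoc)

lemma wedge_center_left_in_center:
  "z \<in> group_center G \<Longrightarrow> h \<in> carrier G \<Longrightarrow> wedge G z h \<in> group_center W"
  by (rule commutator_map_one_imp_center) (simp_all add: center_closed commutator_map_wedge
      commutator_center_left)

lemma wedge_center_right_in_center:
  "z \<in> group_center G \<Longrightarrow> h \<in> carrier G \<Longrightarrow> wedge G h z \<in> group_center W"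
  by (rule commutator_map_one_imp_center) (simp_all add: center_closed commutator_map_wedge
      commutator_center_right)

lemma wedge_center_mult_right: "z \<in> group_center G \<Longrightarrow> h \<in> carrier G \<Longrightarrow> h' \<in> carrier G \<Longrightarrow>
   wedge G z (h \<otimes> h') = wedge G z h \<otimes>\<^bsub>W\<^esub> wedge G z h'"
  using ext_act_eq[of h "wedge G z h'"]
  by (simp add: center_closed wedge_mult_right_act commutator_map_wedge commutator_center_left)

lemma wedge_center_DG:
  assumes z: "z \<in> group_center G" and u: "u \<in> DG"
  shows "wedge G z u = \<one>\<^bsub>W\<^esub>"
proof -
  interpret wz: group_hom G W "wedge G z"
    by (intro group_hom.intro group_hom_axioms.intro is_group W.is_group homI)
      (simp_all add: z center_closed wedge_center_mult_right)
  have "derived_set G (carrier G) \<subseteq> kernel G W (wedge G z)"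
  proof
    fix x assume "x \<in> derived_set G (carrier G)"
    then obtain a b where ab: "a \<in> carrier G" "b \<in> carrier G" "x = commutator G a b"
      by (auto simp add: commutator_def)
    then have "wedge G z x = commutator W (wedge G z a) (wedge G z b)"
      by (simp add: commutator_def)
    also have "\<dots> = \<one>\<^bsub>W\<^esub>"
      using ab z by (simp add: W.commutator_center_left wedge_center_left_in_center)
    finally show "x \<in> kernel G W (wedge G z)" using ab by (simp add: kernel_def)
  qed
  then have "DG \<subseteq> kernel G W (wedge G z)"
    unfolding derived_def by (rule generate_subgroup_incl[OF _ wz.subgroup_kernel])
  then show ?thesis using u by (auto simp add: kernel_def)
qed

lemma ext_act_center: "z \<in> group_center G \<Longrightarrow> A \<in> carrier W \<Longrightarrow> ext_act G z A = A"
  using ext_act_eq[of z A] by (simp add: center_closed wedge_center_DG commutator_map_in_DG)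

lemma wedge_center_mult_left: "z \<in> group_center G \<Longrightarrow> z' \<in> group_center G \<Longrightarrow> h \<in> carrier G \<Longrightarrow>
   wedge G (z \<otimes> z') h = wedge G z h \<otimes>\<^bsub>W\<^esub> wedge G z' h"
  using W.center_commute[OF wedge_center_left_in_center[of z' h], of "wedge G z h"]
  by (simp add: center_closed wedge_mult_left_act ext_act_center)

lemma wedge_center_pow_left: "z \<in> group_center G \<Longrightarrow> h \<in> carrier G \<Longrightarrow>
   wedge G (z [^] (n::nat)) h = (wedge G z h) [^]\<^bsub>W\<^esub> n"
  by (induction n) (simp_all add: wedge_center_mult_left center_pow)

lemma wedge_DG_center: "z \<in> group_center G \<Longrightarrow> u \<in> DG \<Longrightarrow> wedge G u z = \<one>\<^bsub>W\<^esub>"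
  using wedge_swap[of z u] wedge_center_DG[of z u] by (simp add: center_closed DG_closed)

lemma ext_act_wedge_pow:
  assumes x: "x \<in> carrier G" and y: "y \<in> carrier G"
  shows "ext_act G y (wedge G x (y [^] i)) = inv\<^bsub>W\<^esub> (wedge G x y) \<otimes>\<^bsub>W\<^esub> wedge G x (y [^] Suc i)"
proof -
  have "wedge G x (y [^] Suc i) = wedge G x (y \<otimes> y [^] i)"
    using y by (simp only: nat_pow_Suc2)
  also have "\<dots> = wedge G x y \<otimes>\<^bsub>W\<^esub> ext_act G y (wedge G x (y [^] i))"
    using x y by (simp add: wedge_mult_right_act)
  finally show ?thesis using x y by (simp add: W.inv_solve_left)
qed

lemma commutator_exterior_square_eq_one_if_exponent_two:
  assumes exp: "\<And>g. g \<in> carrier G \<Longrightarrow> g [^] (2::nat) = \<one>"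
    and A: "A \<in> carrier W" and B: "B \<in> carrier W"
  shows "commutator W A B = \<one>\<^bsub>W\<^esub>"
proof -
  have comm: "commutator G g h = \<one>" if "g \<in> carrier G" "h \<in> carrier G" for g h
  proof -
    have "\<And>g. g \<in> carrier G \<Longrightarrow> inv g = g"
      using exp by (simp add: inv_equality numeral_2_eq_2)
    then show ?thesis using that exp[of "g \<otimes> h"] by (simp add: commutator_def m_assoc numeral_2_eq_2)
  qed
  have "commutator_map G V = \<one>" if "V \<in> carrier W" for V
    using that by (induction rule: exterior_square_induct)
      (simp_all add: commutator_map_one commutator_map_mult commutator_map_inv commutator_map_wedge comm)
  then show ?thesis using A B by (simp add: commutator_exterior_square)
qed

end

section \<open>Metabelian $p$-central groups\<close>

locale metabelian_p_central = group +
  fixes p :: nat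
  assumes metabelian: "metabelian G"
    and p_central: "p_central G p"
begin

interpretation W: group W by (rule group_exterior_square)

lemma DG_commute: "u \<in> DG \<Longrightarrow> v \<in> DG \<Longrightarrow> u \<otimes> v = v \<otimes> u"
  using metabelian by (simp add: metabelian_def)

lemma commutator_DG: "u \<in> DG \<Longrightarrow> v \<in> DG \<Longrightarrow> commutator G u v = \<one>"
  by (simp add: commutator_eq_one_iff DG_closed DG_commute)

lemma pow_p_center: "x \<in> carrier G \<Longrightarrow> x [^] p \<in> group_center G"
  using p_central by (simp add: p_central_def)

lemma wedge_DG_in_center: "u \<in> DG \<Longrightarrow> v \<in> DG \<Longrightarrow> wedge G u v \<in> group_center W"
  by (rule commutator_map_one_imp_center) (simp_all add: DG_closed commutator_map_wedge commutator_DG)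

lemma wedge_DG_mult_left: "u \<in> DG \<Longrightarrow> u' \<in> DG \<Longrightarrow> v \<in> DG \<Longrightarrow>
    wedge G (u \<otimes> u') v = wedge G u v \<otimes>\<^bsub>W\<^esub> wedge G u' v"
  using ext_act_eq[of u "wedge G u' v"] W.center_commute[OF wedge_DG_in_center[of u' v], of "wedge G u v"]
  by (simp add: DG_closed wedge_mult_left_act commutator_map_wedge commutator_DG)

lemma wedge_DG_inv_left: "u \<in> DG \<Longrightarrow> v \<in> DG \<Longrightarrow> wedge G (inv u) v = inv\<^bsub>W\<^esub> (wedge G u v)"
  using wedge_DG_mult_left[of "inv u" u v] by (simp add: DG_inv DG_closed W.inv_equality)

lemma wedge_DG_pow_left: "u \<in> DG \<Longrightarrow> v \<in> DG \<Longrightarrow> wedge G (u [^] (n::nat)) v = (wedge G u v) [^]\<^bsub>W\<^esub> n"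
  by (induction n) (simp_all add: DG_closed DG_pow wedge_DG_mult_left)

text \<open>By bilinearity \<open>(u \<and> v)\<^sup>p = u\<^sup>p \<and> v\<close>, which is trivial since \<open>u\<^sup>p\<close> is central.\<close>
lemma wedge_DG_pow_p: "u \<in> DG \<Longrightarrow> v \<in> DG \<Longrightarrow> (wedge G u v) [^]\<^bsub>W\<^esub> p = \<one>\<^bsub>W\<^esub>"
  using wedge_DG_pow_left[of u v p] wedge_center_DG[OF pow_p_center[OF DG_closed]] by simp

lemma commutator_exterior_square_in_center:
  "w \<in> carrier W \<Longrightarrow> V \<in> carrier W \<Longrightarrow> commutator W w V \<in> group_center W"
  by (simp add: commutator_exterior_square wedge_DG_in_center commutator_map_in_DG)

lemma commutator_exterior_square_pow_p:
  "w \<in> carrier W \<Longrightarrow> V \<in> carrier W \<Longrightarrow> commutator W w V [^]\<^bsub>W\<^esub> p = \<one>\<^bsub>W\<^esub>"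
  by (simp add: commutator_exterior_square wedge_DG_pow_p commutator_map_in_DG)

abbreviation DG_group where "DG_group \<equiv> G\<lparr>carrier := DG\<rparr>"

lemma comm_group_DG: "comm_group DG_group"
  using subgroup_imp_group[OF subgroup_DG] by (rule group.group_comm_groupI) (simp_all add: DG_commute)

lemma prod_up_eq_finprod_DG:
  "(\<And>i. i < n \<Longrightarrow> f i \<in> DG) \<Longrightarrow> prod_up G f n = finprod DG_group f {..<n}"
proof (induction n)
  case (Suc n)
  interpret H: comm_group DG_group by (rule comm_group_DG)
  have "finprod DG_group f {..<n} \<in> DG"
    using Suc.prems H.finprod_closed[of f "{..<n}"] by (simp add: Pi_def)
  then show ?case
    using Suc by (simp add: lessThan_Suc Pi_def DG_commute)
qed (simp add: comm_monoid.finprod_empty[OF comm_group.axioms(1)[OF comm_group_DG]])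

lemma prod_up_inv_DG: "(\<And>i. i < n \<Longrightarrow> f i \<in> DG) \<Longrightarrow> prod_up G (\<lambda>i. inv (f i)) n = inv (prod_up G f n)"
proof (induction n)
  case (Suc n)
  have "prod_up G f n \<in> DG" "f n \<in> DG"
    using Suc.prems by (simp_all add: prod_up_in_subgroup[OF subgroup_DG])
  then show ?case using Suc by (simp add: inv_mult_group DG_closed DG_commute)
qed simp

lemma pow_p_in_center_torsion: "g \<in> carrier G \<Longrightarrow> g [^] (p * q) = \<one> \<Longrightarrow> g [^] p \<in> center_torsion G q"
  by (simp add: center_torsion_def pow_p_center nat_pow_pow)

lemma commutator_pow_mod_p:
  "x \<in> carrier G \<Longrightarrow> y \<in> carrier G \<Longrightarrow> commutator G x (y [^] n) = commutator G x (y [^] (n mod p))"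
proof -
  assume x: "x \<in> carrier G" and y: "y \<in> carrier G"
  have "(y [^] p) [^] (n div p) \<otimes> y [^] (n mod p) = y [^] (p * (n div p) + n mod p)"
    by (simp only: nat_pow_pow[OF y] nat_pow_mult[OF y])
  then have "y [^] n = (y [^] p) [^] (n div p) \<otimes> y [^] (n mod p)"
    by simp
  then show ?thesis
    using commutator_mult_center_right[OF x center_pow[OF pow_p_center[OF y]]] y by simp
qed

lemma prod_conjg_commutator_in_center_torsion:
  assumes x: "x \<in> carrier G" and y: "y \<in> carrier G" and exp: "\<And>g. g \<in> carrier G \<Longrightarrow> g [^] (p * q) = \<one>"
  shows "prod_up G (\<lambda>k. conjg G (x [^] k) (commutator G x (y [^] (a * k)))) p \<in> center_torsion G q"
proof -
  define R where "R = prod_up G (\<lambda>k. conjg G (x [^] k) (commutator G ((y [^] a) [^] k) x)) p"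
  have R: "R \<in> carrier G" using x y by (simp add: R_def)
  have "(x \<otimes> y [^] a) [^] p = R \<otimes> x [^] p \<otimes> (y [^] a) [^] p"
    using pow_mult_eq_prod_up_commutator[of x "y [^] a"] x y by (simp add: R_def)
  then have "R = (x \<otimes> y [^] a) [^] p \<otimes> inv ((y [^] a) [^] p) \<otimes> inv (x [^] p)"
    using R x y by (simp add: m_assoc)
  then have "R \<in> center_torsion G q"
    using x y exp by (simp add: subgroup.m_closed[OF subgroup_center_torsion]
        subgroup.m_inv_closed[OF subgroup_center_torsion] pow_p_in_center_torsion)
  moreover have "R = inv (prod_up G (\<lambda>k. conjg G (x [^] k) (commutator G x (y [^] (a * k)))) p)"
    unfolding R_def using x y
    by (simp add: commutator_swap[of x] conjg_inv nat_pow_pow DG_conjg commutator_in_DG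
        flip: prod_up_inv_DG)
  ultimately show ?thesis
    using x y subgroup.m_inv_closed[OF subgroup_center_torsion, of "R" q] by simp
qed

lemma prod_prod_conjg_commutator:
  assumes p: "Factorial_Ring.prime p" and x: "x \<in> carrier G" and y: "y \<in> carrier G"
  defines "t \<equiv> \<lambda>n. commutator G x (y [^] n)"
  shows "prod_up G (\<lambda>a. prod_up G (\<lambda>k. conjg G (x [^] k) (t (a * k))) p) p
       = prod_up G (\<lambda>k. conjg G (x [^] Suc k) (prod_up G t p)) (p - 1)"
proof -
  interpret H: comm_group DG_group by (rule comm_group_DG)
  have t: "\<And>n. t n \<in> DG" using x y by (simp add: t_def commutator_in_DG)
  have xt: "\<And>k n. conjg G (x [^] (k::nat)) (t n) \<in> DG" using x t by (simp add: DG_conjg)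
  define E where "E = (\<lambda>k. finprod DG_group (\<lambda>a. t (a * k)) {..<p})"
  have fDG: "finprod DG_group f A \<in> DG" if "\<And>i. f i \<in> DG" for f and A :: "nat set"
    using H.finprod_closed[of f A] that by (simp add: Pi_def)
  have E: "\<And>k. E k \<in> DG" unfolding E_def using t by (simp add: fDG)
  have E0: "E 0 = \<one>"
    using x H.finprod_one_eqI[of "{..<p}" "\<lambda>a. \<one>"] by (simp add: E_def t_def commutator_center_right)
  have Ek: "E k = prod_up G t p" if "0 < k" "k < p" for k
  proof -
    have "E k = finprod DG_group (\<lambda>a. t (a * k mod p)) {..<p}"
      unfolding E_def
    proof (rule H.finprod_cong')
      show "t (a * k) = t (a * k mod p)" for a
        using commutator_pow_mod_p[OF x y, of "a * k"] by (simp add: t_def)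
    qed (use t in \<open>auto simp add: Pi_def\<close>)
    also have "\<dots> = finprod DG_group t ((\<lambda>a. a * k mod p) ` {..<p})"
      using mult_mod_prime_image(1)[OF p that] t by (simp add: H.finprod_reindex Pi_def)
    also have "\<dots> = prod_up G t p"
      using mult_mod_prime_image(2)[OF p that] t by (simp add: prod_up_eq_finprod_DG)
    finally show ?thesis .
  qed
  have "prod_up G (\<lambda>a. prod_up G (\<lambda>k. conjg G (x [^] k) (t (a * k))) p) p
      = finprod DG_group (\<lambda>a. finprod DG_group (\<lambda>k. conjg G (x [^] k) (t (a * k))) {..<p}) {..<p}"
    using xt by (simp add: prod_up_eq_finprod_DG fDG)
  also have "\<dots> = finprod DG_group (\<lambda>k. finprod DG_group (\<lambda>a. conjg G (x [^] k) (t (a * k))) {..<p}) {..<p}"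
    using xt by (intro H.finprod_swap) simp_all
  also have "\<dots> = finprod DG_group (\<lambda>k. conjg G (x [^] k) (E k)) {..<p}"
  proof (rule H.finprod_cong')
    fix k assume "k \<in> {..<p}"
    have "finprod DG_group (\<lambda>a. conjg G (x [^] k) (t (a * k))) {..<p}
        = prod_up G (\<lambda>a. conjg G (x [^] k) (t (a * k))) p"
      using xt by (simp add: prod_up_eq_finprod_DG)
    also have "\<dots> = conjg G (x [^] k) (prod_up G (\<lambda>a. t (a * k)) p)"
      using prod_up_hom[OF conjg_hom[OF nat_pow_closed[OF x]] is_group, of p "\<lambda>a. t (a * k)"] t
      by (simp add: DG_closed)
    finally show "finprod DG_group (\<lambda>a. conjg G (x [^] k) (t (a * k))) {..<p} = conjg G (x [^] k) (E k)"
      using t by (simp add: E_def prod_up_eq_finprod_DG)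
  qed (use x E in \<open>simp_all add: Pi_def DG_conjg\<close>)
  also have "\<dots> = prod_up G (\<lambda>k. conjg G (x [^] k) (E k)) p"
    using x E by (simp add: prod_up_eq_finprod_DG DG_conjg)
  also have "\<dots> = conjg G (x [^] (0::nat)) (E 0) \<otimes> prod_up G (\<lambda>k. conjg G (x [^] Suc k) (E (Suc k))) (p - 1)"
    using prod_up_Suc_shift[of "p - 1" "\<lambda>k. conjg G (x [^] k) (E k)"] prime_gt_0_nat[OF p] x E
    by (simp add: DG_closed)
  also have "\<dots> = prod_up G (\<lambda>k. conjg G (x [^] Suc k) (prod_up G t p)) (p - 1)"
    using x t E0 E Ek by (simp add: DG_closed cong: prod_up_cong)
  finally show ?thesis .
qed

text \<open>Double counting the product of all \<open>[x, y\<^sup>a\<^sup>k]\<close>, conjugated by \<open>x\<^sup>k\<close>, shows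
  that the product over \<open>0 < k < p\<close> of the conjugates of \<open>s = \<Prod>\<^sub>i [x, y\<^sup>i]\<close> lies in
  \<open>center_torsion G q\<close>, and so does the product over all \<open>k < p\<close>, which is \<open>(s x)\<^sup>p x\<^sup>-\<^sup>p\<close>.\<close>
lemma prod_commutator_in_center_torsion:
  assumes p: "Factorial_Ring.prime p" and x: "x \<in> carrier G" and y: "y \<in> carrier G"
    and exp: "\<And>g. g \<in> carrier G \<Longrightarrow> g [^] (p * q) = \<one>"
  shows "prod_up G (\<lambda>i. commutator G x (y [^] i)) p \<in> center_torsion G q"
proof -
  define s where "s = prod_up G (\<lambda>i. commutator G x (y [^] i)) p"
  define M where "M = prod_up G (\<lambda>k. conjg G (x [^] Suc k) s) (p - 1)"
  have s: "s \<in> carrier G" and M: "M \<in> carrier G" using x y by (simp_all add: s_def M_def)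
  have "prod_up G (\<lambda>a. prod_up G (\<lambda>k. conjg G (x [^] k) (commutator G x (y [^] (a * k)))) p) p
      \<in> center_torsion G q"
    by (intro prod_up_in_subgroup[OF subgroup_center_torsion]
        prod_conjg_commutator_in_center_torsion[OF x y exp])
  then have "M \<in> center_torsion G q"
    using prod_prod_conjg_commutator[OF p x y] by (simp add: M_def s_def)
  moreover have "(s \<otimes> x) [^] p \<otimes> inv (x [^] p) = s \<otimes> M"
    using pow_mult_eq_prod_up_conjg[OF s x, of p] prod_up_Suc_shift[of "p - 1" "\<lambda>k. conjg G (x [^] k) s"]
      prime_gt_0_nat[OF p] s x
    by (simp add: M_def m_assoc)
  then have "s \<otimes> M \<in> center_torsion G q"
    using s x exp by (metis subgroup.m_closed subgroup.m_inv_closed subgroup_center_torsion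
        pow_p_in_center_torsion m_closed nat_pow_closed)
  ultimately have "s \<otimes> M \<otimes> inv M \<in> center_torsion G q"
    by (simp add: subgroup.m_closed subgroup.m_inv_closed subgroup_center_torsion)
  then show ?thesis using s M by (simp add: s_def[symmetric] m_assoc)
qed

lemma commutator_map_prod_down:
  assumes "\<And>i. i < n \<Longrightarrow> f i \<in> carrier W"
  shows "commutator_map G (prod_down W f n) = commutator_map G (prod_up W f n)"
proof -
  have "commutator_map G (prod_down W f n) = prod_down G (\<lambda>i. commutator_map G (f i)) n"
    using W.prod_down_hom[OF commutator_map_hom is_group] assms by simp
  also have "\<dots> = prod_up G (\<lambda>i. commutator_map G (f i)) n"
    using assms by (intro prod_down_eq_prod_up) (simp_all add: DG_commute commutator_map_in_DG)
  also have "\<dots> = commutator_map G (prod_up W f n)"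
    using W.prod_up_hom[OF commutator_map_hom is_group] assms by simp
  finally show ?thesis .
qed

lemma wedge_pow_p_identity_prod_up:
  assumes x: "x \<in> carrier G" and y: "y \<in> carrier G"
  defines "Q \<equiv> \<lambda>i. wedge G x (y [^] i)"
    and "P \<equiv> prod_up W (\<lambda>k. wedge G x (y [^] Suc k))"
  shows "wedge G x y [^]\<^bsub>W\<^esub> p \<otimes>\<^bsub>W\<^esub> wedge G y (commutator_map G (prod_up W Q p))
       = Q p \<otimes>\<^bsub>W\<^esub> prod_up W (\<lambda>i. wedge G (commutator G x y) (commutator_map G (P i))) p"
proof -
  define m where "m = wedge G x y"
  define c where "c = commutator G x y"
  define z where "z = (\<lambda>i. wedge G c (commutator_map G (P i)))"
  define Pi where "Pi = prod_up W Q p"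
  have Q_Suc: "(\<lambda>k. wedge G x (y [^] Suc k)) = (\<lambda>k. Q (Suc k))" by (simp add: Q_def)
  have m: "m \<in> carrier W" and c: "c \<in> DG" and Q: "\<And>i. Q i \<in> carrier W"
    and P: "\<And>j. P j \<in> carrier W" and Pi: "Pi \<in> carrier W"
    using x y by (simp_all add: m_def c_def Q_def P_def Pi_def commutator_in_DG)
  have z: "\<And>i. z i \<in> group_center W"
    using c P by (simp add: z_def wedge_DG_in_center commutator_map_in_DG)
  have Z: "prod_up W z p \<in> group_center W"
    using z by (simp add: W.prod_up_in_subgroup[OF W.subgroup_center])
  have Qp: "Q p \<in> group_center W"
    using x y by (simp add: Q_def wedge_center_right_in_center pow_p_center)
  have "ext_act G y Pi = prod_up W (\<lambda>i. inv\<^bsub>W\<^esub> m \<otimes>\<^bsub>W\<^esub> Q (Suc i)) p"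
    using W.prod_up_hom[OF ext_act_hom[OF y] W.is_group, of p Q] Q x y
    by (simp add: Pi_def Q_def m_def ext_act_wedge_pow)
  also have "\<dots> = inv\<^bsub>W\<^esub> m [^]\<^bsub>W\<^esub> p \<otimes>\<^bsub>W\<^esub> P p \<otimes>\<^bsub>W\<^esub> prod_up W z p"
    unfolding P_def Q_Suc
  proof (rule W.prod_up_inv_mult_eq[OF m Q z])
    fix i
    show "m \<otimes>\<^bsub>W\<^esub> prod_up W (\<lambda>k. Q (Suc k)) i \<otimes>\<^bsub>W\<^esub> inv\<^bsub>W\<^esub> m
        = z i \<otimes>\<^bsub>W\<^esub> prod_up W (\<lambda>k. Q (Suc k)) i"
      using conj_eq_ext_act_commutator_map[OF m P[of i]] ext_act_eq[OF DG_closed[OF c] P[of i]] x y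
      by (simp add: m_def c_def z_def P_def Q_def commutator_map_wedge)
  qed
  also have "P p = Pi \<otimes>\<^bsub>W\<^esub> Q p"
    using W.prod_up_Suc_shift[of p Q] Q x y by (simp add: P_def Pi_def Q_def)
  finally have "wedge G y (commutator_map G Pi) \<otimes>\<^bsub>W\<^esub> Pi
      = (inv\<^bsub>W\<^esub> m [^]\<^bsub>W\<^esub> p \<otimes>\<^bsub>W\<^esub> Q p \<otimes>\<^bsub>W\<^esub> prod_up W z p) \<otimes>\<^bsub>W\<^esub> Pi"
    using ext_act_eq[OF y Pi] W.center_commute[OF W.center_mult[OF Qp Z] Pi] m Q Pi Z
    by (simp add: W.m_assoc W.center_closed)
  then have "wedge G y (commutator_map G Pi) = inv\<^bsub>W\<^esub> m [^]\<^bsub>W\<^esub> p \<otimes>\<^bsub>W\<^esub> Q p \<otimes>\<^bsub>W\<^esub> prod_up W z p"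
    using m y Q Pi Z by (simp add: W.center_closed)
  then show ?thesis
    using m Q Z by (simp add: m_def[symmetric] c_def[symmetric] z_def[symmetric] Pi_def[symmetric]
        W.nat_pow_inv W.m_assoc[symmetric] W.center_closed)
qed

lemma wedge_pow_p_identity_prod_down:
  assumes x: "x \<in> carrier G" and y: "y \<in> carrier G"
    and s: "commutator_map G (prod_up W (\<lambda>i. wedge G x (y [^] i)) p) \<in> group_center G"
  defines "Q \<equiv> \<lambda>i. wedge G x (y [^] i)"
    and "P \<equiv> prod_up W (\<lambda>k. wedge G x (y [^] Suc k))"
  shows "wedge G x y [^]\<^bsub>W\<^esub> p \<otimes>\<^bsub>W\<^esub> wedge G y (commutator_map G (prod_up W Q p))
       = Q p \<otimes>\<^bsub>W\<^esub> prod_up W (\<lambda>i. wedge G (inv (commutator G x y)) (commutator_map G (P (Suc i)))) p"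
proof -
  define m where "m = wedge G x y"
  define c where "c = commutator G x y"
  define z where "z = (\<lambda>i. wedge G (inv c) (commutator_map G (P (Suc i))))"
  define L where "L = prod_down W (\<lambda>k. Q (Suc k))"
  define Pi where "Pi = prod_down W Q p"
  have m: "m \<in> carrier W" and c: "inv c \<in> DG" and Q: "\<And>i. Q i \<in> carrier W"
    and P: "\<And>j. P j \<in> carrier W" and L: "\<And>j. L j \<in> carrier W" and Pi: "Pi \<in> carrier W"
    using x y by (simp_all add: m_def c_def Q_def P_def L_def Pi_def commutator_in_DG DG_inv)
  have z: "\<And>i. z i \<in> group_center W"
    using c P by (simp add: z_def wedge_DG_in_center commutator_map_in_DG)
  have Z: "prod_up W z p \<in> group_center W"
    using z by (simp add: W.prod_up_in_subgroup[OF W.subgroup_center])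
  have Qp: "Q p \<in> group_center W"
    using x y by (simp add: Q_def wedge_center_right_in_center pow_p_center)
  have kL: "commutator_map G (L j) = commutator_map G (P j)" for j
    unfolding L_def P_def Q_def using x y by (intro commutator_map_prod_down) simp
  have kPi: "commutator_map G Pi = commutator_map G (prod_up W Q p)"
    unfolding Pi_def Q_def using x y by (intro commutator_map_prod_down) simp
  have "ext_act G y Pi = prod_down W (\<lambda>i. inv\<^bsub>W\<^esub> m \<otimes>\<^bsub>W\<^esub> Q (Suc i)) p"
    using W.prod_down_hom[OF ext_act_hom[OF y] W.is_group, of p Q] Q x y
    by (simp add: Pi_def Q_def m_def ext_act_wedge_pow)
  also have "\<dots> = L p \<otimes>\<^bsub>W\<^esub> inv\<^bsub>W\<^esub> m [^]\<^bsub>W\<^esub> p \<otimes>\<^bsub>W\<^esub> prod_up W z p"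
    unfolding L_def
  proof (rule W.prod_down_inv_mult_eq[OF m Q z])
    fix i
    have "commutator_map G (inv\<^bsub>W\<^esub> m) = inv c"
      using x y by (simp add: m_def c_def commutator_map_inv commutator_map_wedge)
    then have "inv\<^bsub>W\<^esub> m \<otimes>\<^bsub>W\<^esub> L (Suc i) \<otimes>\<^bsub>W\<^esub> m = z i \<otimes>\<^bsub>W\<^esub> L (Suc i)"
      using conj_eq_ext_act_commutator_map[OF W.inv_closed[OF m] L[of "Suc i"]]
        ext_act_eq[OF DG_closed[OF c] L[of "Suc i"]] m
      by (simp add: z_def kL)
    then show "inv\<^bsub>W\<^esub> m \<otimes>\<^bsub>W\<^esub> prod_down W (\<lambda>k. Q (Suc k)) (Suc i) \<otimes>\<^bsub>W\<^esub> m
        = z i \<otimes>\<^bsub>W\<^esub> prod_down W (\<lambda>k. Q (Suc k)) (Suc i)"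
      by (simp only: L_def)
  qed
  also have "L p = Q p \<otimes>\<^bsub>W\<^esub> Pi"
    using W.prod_down_Suc_shift[of p Q] Q x y by (simp add: L_def Pi_def Q_def)
  finally have "Pi \<otimes>\<^bsub>W\<^esub> wedge G y (commutator_map G Pi)
      = Pi \<otimes>\<^bsub>W\<^esub> (Q p \<otimes>\<^bsub>W\<^esub> inv\<^bsub>W\<^esub> m [^]\<^bsub>W\<^esub> p \<otimes>\<^bsub>W\<^esub> prod_up W z p)"
    using ext_act_eq[OF y Pi] W.center_commute[OF wedge_center_right_in_center[OF s[folded Q_def] y] Pi]
      W.center_commute[OF Qp Pi] m Q Pi Z
    by (simp add: kPi W.m_assoc W.center_closed)
  then have "wedge G y (commutator_map G Pi) = Q p \<otimes>\<^bsub>W\<^esub> inv\<^bsub>W\<^esub> m [^]\<^bsub>W\<^esub> p \<otimes>\<^bsub>W\<^esub> prod_up W z p"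
    using m y Q Pi Z by (simp add: W.center_closed)
  also have "Q p \<otimes>\<^bsub>W\<^esub> inv\<^bsub>W\<^esub> m [^]\<^bsub>W\<^esub> p = inv\<^bsub>W\<^esub> m [^]\<^bsub>W\<^esub> p \<otimes>\<^bsub>W\<^esub> Q p"
    using W.center_commute[OF Qp] m by simp
  finally show ?thesis
    using m Q Z
    by (simp add: m_def[symmetric] c_def[symmetric] z_def[symmetric] kPi[symmetric] Pi_def[symmetric]
        W.nat_pow_inv W.m_assoc[symmetric] W.center_closed)
qed

lemma prod_wedge_commutator_eq_one:
  assumes p: "Factorial_Ring.prime p" and x: "x \<in> carrier G" and y: "y \<in> carrier G"
    and s: "commutator_map G (prod_up W (\<lambda>i. wedge G x (y [^] i)) p) \<in> group_center G"
  defines "P \<equiv> prod_up W (\<lambda>k. wedge G x (y [^] Suc k))"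
  shows "prod_up W (\<lambda>i. wedge G (commutator G x y) (commutator_map G (P i))) p = \<one>\<^bsub>W\<^esub>"
proof -
  define c where "c = commutator G x y"
  define f where "f = (\<lambda>i. wedge G c (commutator_map G (P i)))"
  define Z where "Z = prod_up W f p"
  have c: "c \<in> DG" using x y by (simp add: c_def commutator_in_DG)
  have P: "\<And>j. P j \<in> carrier W" using x y by (simp add: P_def)
  have f: "\<And>i. f i \<in> group_center W"
    using c P by (simp add: f_def wedge_DG_in_center commutator_map_in_DG)
  have Z: "Z \<in> carrier W"
    using f by (simp add: Z_def W.prod_up_in_subgroup[OF W.subgroup_center] W.center_closed)
  have f0: "f 0 = \<one>\<^bsub>W\<^esub>" using c by (simp add: f_def P_def commutator_map_one DG_closed)
  have "P p = prod_up W (\<lambda>i. wedge G x (y [^] i)) p \<otimes>\<^bsub>W\<^esub> wedge G x (y [^] p)"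
    using W.prod_up_Suc_shift[of p "\<lambda>i. wedge G x (y [^] i)"] x y by (simp add: P_def)
  then have "commutator_map G (P p) = commutator_map G (prod_up W (\<lambda>i. wedge G x (y [^] i)) p)"
    using commutator_center_right[OF pow_p_center[OF y] x] x y
    by (simp add: commutator_map_mult commutator_map_wedge)
  then have fp: "f p = \<one>\<^bsub>W\<^esub>" using c s by (simp add: f_def wedge_DG_center)
  have "Z [^]\<^bsub>W\<^esub> p = prod_up W (\<lambda>i. f i [^]\<^bsub>W\<^esub> p) p"
    unfolding Z_def by (rule W.prod_up_pow_center) (simp add: f)
  also have "\<dots> = \<one>\<^bsub>W\<^esub>"
    using c P by (simp add: f_def wedge_DG_pow_p commutator_map_in_DG W.prod_up_one)
  finally have Zp: "Z [^]\<^bsub>W\<^esub> p = \<one>\<^bsub>W\<^esub>" .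
  show ?thesis
  proof (cases "p = 2")
    case True
    have "f 1 = \<one>\<^bsub>W\<^esub>"
      using c x y by (simp add: f_def P_def commutator_map_wedge c_def[symmetric] DG_closed)
    then show ?thesis
      using True f0 unfolding c_def[symmetric] f_def[symmetric] by (simp add: numeral_2_eq_2)
  next
    case False
    then have "odd p" using p prime_ge_2_nat[OF p] prime_odd_nat[OF p] by simp
    define Z' where "Z' = prod_up W (\<lambda>i. wedge G (inv c) (commutator_map G (P (Suc i)))) p"
    \<comment> \<open>comparing the two expansions of \<open>(x \<and> y)\<^sup>p (y \<and> s)\<close> gives \<open>Z = \<Prod>\<^sub>i f(i+1)\<^sup>-\<^sup>1\<close>\<close>
    have "wedge G x (y [^] p) \<otimes>\<^bsub>W\<^esub> Z = wedge G x (y [^] p) \<otimes>\<^bsub>W\<^esub> Z'"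
      using wedge_pow_p_identity_prod_up[OF x y, symmetric] wedge_pow_p_identity_prod_down[OF x y s]
      unfolding Z_def Z'_def f_def c_def P_def by (rule HOL.trans)
    moreover have "Z' \<in> carrier W"
      using c P by (simp add: Z'_def DG_closed commutator_map_in_DG)
    ultimately have "Z = Z'"
      using W.Units_l_cancel[of "wedge G x (y [^] p)" Z Z'] x y Z by simp
    also have "Z' = prod_up W (\<lambda>i. inv\<^bsub>W\<^esub> (f (Suc i))) p"
      unfolding Z'_def using c P
      by (intro W.prod_up_cong) (simp add: f_def wedge_DG_inv_left commutator_map_in_DG)
    finally have "Z \<otimes>\<^bsub>W\<^esub> Z = inv\<^bsub>W\<^esub> (f p) \<otimes>\<^bsub>W\<^esub> f 0"
      using W.prod_up_telescope[of p f] f by (simp add: Z_def)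
    then have "Z [^]\<^bsub>W\<^esub> (2::nat) = \<one>\<^bsub>W\<^esub>"
      using Z f0 fp by (simp add: numeral_2_eq_2)
    then show ?thesis
      using W.eq_one_if_pow_two_and_odd[OF Z _ Zp \<open>odd p\<close>] by (simp add: Z_def f_def c_def)
  qed
qed

lemma wedge_pow_p_eq:
  assumes p: "Factorial_Ring.prime p" and x: "x \<in> carrier G" and y: "y \<in> carrier G"
    and s: "commutator_map G (prod_up W (\<lambda>i. wedge G x (y [^] i)) p) \<in> group_center G"
  shows "wedge G x y [^]\<^bsub>W\<^esub> p
       = wedge G x (y [^] p) \<otimes>\<^bsub>W\<^esub> inv\<^bsub>W\<^esub> (wedge G y (commutator_map G (prod_up W (\<lambda>i. wedge G x (y [^] i)) p)))"
  using wedge_pow_p_identity_prod_up[OF x y] prod_wedge_commutator_eq_one[OF p x y s] x y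
  by (simp add: W.inv_solve_right center_closed[OF s])

lemma wedge_pow_p_mult_eq_one:
  assumes p: "Factorial_Ring.prime p" and x: "x \<in> carrier G" and y: "y \<in> carrier G"
    and s: "commutator_map G (prod_up W (\<lambda>i. wedge G x (y [^] i)) p) \<in> center_torsion G q"
    and yq: "y [^] (p * q) = \<one>"
  shows "wedge G x y [^]\<^bsub>W\<^esub> (p * q) = \<one>\<^bsub>W\<^esub>"
proof -
  define s where "s = commutator_map G (prod_up W (\<lambda>i. wedge G x (y [^] i)) p)"
  have sZ: "s \<in> group_center G" and sq: "s [^] q = \<one>"
    using s by (simp_all add: s_def center_torsion_def)
  have yp: "y [^] p \<in> group_center G" using y by (rule pow_p_center)
  have "wedge G x (y [^] p) [^]\<^bsub>W\<^esub> q = inv\<^bsub>W\<^esub> (wedge G (y [^] p) x [^]\<^bsub>W\<^esub> q)"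
    using wedge_swap[of "y [^] p" x] x y by (simp add: W.nat_pow_inv)
  also have "\<dots> = \<one>\<^bsub>W\<^esub>"
    using wedge_center_pow_left[OF yp x, of q, symmetric] x y yq by (simp add: nat_pow_pow)
  finally have Qq: "wedge G x (y [^] p) [^]\<^bsub>W\<^esub> q = \<one>\<^bsub>W\<^esub>" .
  have "inv\<^bsub>W\<^esub> (wedge G y s) [^]\<^bsub>W\<^esub> q = wedge G (s [^] q) y"
    using wedge_swap[of s y] wedge_center_pow_left[OF sZ y, of q] y center_closed[OF sZ] by simp
  then have Sq: "inv\<^bsub>W\<^esub> (wedge G y s) [^]\<^bsub>W\<^esub> q = \<one>\<^bsub>W\<^esub>" using sq y by simp
  have "wedge G x y [^]\<^bsub>W\<^esub> (p * q) = (wedge G x y [^]\<^bsub>W\<^esub> p) [^]\<^bsub>W\<^esub> q"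
    using x y by (simp add: W.nat_pow_pow)
  also have "\<dots> = wedge G x (y [^] p) [^]\<^bsub>W\<^esub> q \<otimes>\<^bsub>W\<^esub> inv\<^bsub>W\<^esub> (wedge G y s) [^]\<^bsub>W\<^esub> q"
    using wedge_pow_p_eq[OF p x y sZ[unfolded s_def]] wedge_center_right_in_center[OF yp x] y sZ
    by (simp add: s_def[symmetric] W.center_pow_mult_distrib center_closed)
  finally show ?thesis using Qq Sq by simp
qed

end

section \<open>The exponent of the exterior square\<close>

context metabelian_p_central
begin

interpretation W: group W by (rule group_exterior_square)

lemma wedge_pow_exponent_eq_one:
  assumes p: "Factorial_Ring.prime p" and e: "e = p ^ n"
    and exp: "\<And>g. g \<in> carrier G \<Longrightarrow> g [^] e = \<one>"
    and x: "x \<in> carrier G" and y: "y \<in> carrier G"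
  shows "wedge G x y [^]\<^bsub>W\<^esub> e = \<one>\<^bsub>W\<^esub>"
proof (cases n)
  case 0
  then have "x = \<one>" using exp[OF x] x e by simp
  then show ?thesis using y by simp
next
  case (Suc n')
  then have epq: "e = p * p ^ n'" using e by simp
  have "commutator_map G (prod_up W (\<lambda>i. wedge G x (y [^] i)) p) = prod_up G (\<lambda>i. commutator G x (y [^] i)) p"
    using W.prod_up_hom[OF commutator_map_hom is_group, of p "\<lambda>i. wedge G x (y [^] i)"] x y
    by (simp add: commutator_map_wedge)
  then show ?thesis
    using wedge_pow_p_mult_eq_one[OF p x y] prod_commutator_in_center_torsion[OF p x y] exp y
    by (simp add: epq)
qed

lemma exterior_square_pow_exponent_eq_one:
  assumes p: "Factorial_Ring.prime p" and e: "e = p ^ n"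
    and exp: "\<And>g. g \<in> carrier G \<Longrightarrow> g [^] e = \<one>"
    and w: "w \<in> carrier W"
  shows "w [^]\<^bsub>W\<^esub> e = \<one>\<^bsub>W\<^esub>"
proof -
  have mult: "(A \<otimes>\<^bsub>W\<^esub> B) [^]\<^bsub>W\<^esub> e = \<one>\<^bsub>W\<^esub>"
    if A: "A \<in> carrier W" "A [^]\<^bsub>W\<^esub> e = \<one>\<^bsub>W\<^esub>" and B: "B \<in> carrier W" "B [^]\<^bsub>W\<^esub> e = \<one>\<^bsub>W\<^esub>" for A B
  proof -
    have "commutator W B A [^]\<^bsub>W\<^esub> (\<Sum>i<e. i) = \<one>\<^bsub>W\<^esub>"
    proof (cases "e = 2")
      case True
      then show ?thesis
        using commutator_exterior_square_eq_one_if_exponent_two[OF _ B(1) A(1)] exp by simp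
    next
      case False
      then obtain r where "(\<Sum>i<e. i) = p * r"
        using prime_dvd_sum_lessThan[OF p e] by (auto elim: dvdE)
      then show ?thesis
        using commutator_exterior_square_pow_p[OF B(1) A(1)] A B by (simp add: W.nat_pow_pow[symmetric])
    qed
    then show ?thesis
      using W.pow_mult_central_commutator[OF A(1) B(1) commutator_exterior_square_in_center[OF B(1) A(1)]]
        A B by simp
  qed
  show ?thesis using w
  proof (induction rule: exterior_square_induct)
    case (mult_wedge A g h)
    then show ?case by (simp add: mult wedge_pow_exponent_eq_one[OF p e exp])
  next
    case (mult_inv_wedge A g h)
    then show ?case by (simp add: mult W.nat_pow_inv wedge_pow_exponent_eq_one[OF p e exp])
  qed simp
qed

end

theorem theorem6p1:
  fixes G :: "('a, 'b) monoid_scheme" and p :: nat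
  assumes "Factorial_Ring.prime p"
    and "finite_p_group G p"
    and "metabelian G"
    and "p_central G p"
  shows "group_exponent (exterior_square G) dvd group_exponent G"
proof -
  obtain k where G: "group G" "finite (carrier G)" "order G = p ^ k"
    using assms(2) unfolding finite_p_group_def by auto
  interpret metabelian_p_central G p
    using G(1) assms(3,4) by (rule metabelian_p_central.intro[OF _ metabelian_p_central_axioms.intro])
  let ?e = "group_exponent G"
  have exp: "\<And>g. g \<in> carrier G \<Longrightarrow> g [^]\<^bsub>G\<^esub> ?e = \<one>\<^bsub>G\<^esub>" and "0 < ?e"
    using pow_group_exponent[OF G(1,2)] by auto
  have "?e dvd p ^ k"
    using group_exponent_dvdI[OF G(1) _ pow_order_eq_1] G prime_gt_0_nat[OF assms(1)]
    by (simp add: order_gt_0_iff_finite)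
  then obtain n where "?e = p ^ n"
    using divides_primepow_nat[OF assms(1)] by auto
  then show ?thesis
    using group_exponent_dvdI[OF group_exterior_square \<open>0 < ?e\<close>]
      exterior_square_pow_exponent_eq_one[OF assms(1) _ exp] by blast
qed

end
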